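(* Let $X$ and $\Theta$ be compact metric spaces, let $\tau:\Theta\times X\to X$, $(\theta,x)\mapsto \tau_\theta(x)$, be continuous, and let $q=(q_x)_{x\in X}$ be a family of finite positive Borel measures on $\Theta$ such that $\sup_{x} q_x(\Theta)<\infty$, $\inf_{x} q_x(\Theta)>0$, $x\mapsto q_x(A)$ is Borel measurable for each Borel $A\subseteq\Theta$, and $x\mapsto q_x$ is weak-$*$ continuous. Let $B_q(f)(x)=\int_\Theta f(\tau_\theta(x))\,dq_x(\theta)$ on $C(X,\mathbb{R})$, and let $\mathcal{L}_q:\mathcal{M}_s(X)\to\mathcal{M}_s(X)$ be the Markov operator, i.e. the unique bounded linear operator with $\int_X f\,d[\mathcal{L}_q(\mu)]=\int_X B_q(f)\,d\mu$ for all $\mu\in\mathcal{M}_s(X)$ and $f\in C(X,\mathbb{R})$. Then there exists a number $\rho$ with $0<\rho\le \rho(B_q)$, where $\rho(B_q)$ is the spectral radius of $B_q$ on $C(X,\mathbb{R})$, such that the set \[ \{\nu\in\mathcal{M}_1(X):\ \mathcal{L}_q\nu=\rho\,\nu\} \] is nonempty.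
   Context: $\mathcal{M}_s(X)$ denotes the space of finite signed Borel measures on $X$ (the dual of $C(X,\mathbb{R})$ with sup norm), and $\mathcal{M}_1(X)$ the set of Borel probability measures on $X$ with the weak-$*$ topology. *)

theory Defs
  imports "HOL-Probability.Probability"
begin

definition Bq_fun :: "('x \<Rightarrow> 't measure) \<Rightarrow> ('t \<Rightarrow> 'x \<Rightarrow> 'x) \<Rightarrow> ('x \<Rightarrow> real) \<Rightarrow> 'x \<Rightarrow> real" where
  "Bq_fun q \<tau> f x = (\<integral>\<theta>. f (\<tau> \<theta> x) \<partial>(q x))"

text \<open>B_q as a bounded linear operator on C(X,R) (= bounded continuous functions, X compact).\<close>
definition Bq_op :: "('x::metric_space \<Rightarrow> 't measure) \<Rightarrow> ('t \<Rightarrow> 'x \<Rightarrow> 'x)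
    \<Rightarrow> ('x \<Rightarrow>\<^sub>C real) \<Rightarrow>\<^sub>L ('x \<Rightarrow>\<^sub>C real)" where
  "Bq_op q \<tau> = Blinfun (\<lambda>f. Bcontfun (Bq_fun q \<tau> (apply_bcontfun f)))"

definition blinfun_pow :: "('a::real_normed_vector \<Rightarrow>\<^sub>L 'a) \<Rightarrow> nat \<Rightarrow> ('a \<Rightarrow>\<^sub>L 'a)" where
  "blinfun_pow T n = ((\<lambda>S. T o\<^sub>L S) ^^ n) id_blinfun"

text \<open>Spectral radius via the Gelfand formula: inf over n>=1 of norm(T^n)^(1/n)
  (equal to lim norm(T^n)^(1/n)).\<close>
definition spectral_radius :: "('a::real_normed_vector \<Rightarrow>\<^sub>L 'a) \<Rightarrow> real" where
  "spectral_radius T = (INF n\<in>{1..}. norm (blinfun_pow T n) powr (1 / real n))"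

text \<open>Lq_image q tau nu mu: mu is the image L_q(nu) of nu under the Markov operator,
  i.e. the defining duality holds: integral f d mu = integral B_q f d nu for all f in C(X,R).\<close>
definition Lq_image :: "('x::metric_space \<Rightarrow> 't measure) \<Rightarrow> ('t \<Rightarrow> 'x \<Rightarrow> 'x) \<Rightarrow> 'x measure \<Rightarrow> 'x measure \<Rightarrow> bool" where
  "Lq_image q \<tau> \<nu> \<mu> \<longleftrightarrow> sets \<mu> = sets borel \<and>
     (\<forall>f::'x \<Rightarrow> real. continuous_on UNIV f \<longrightarrow> (\<integral>x. f x \<partial>\<mu>) = (\<integral>x. Bq_fun q \<tau> f x \<partial>\<nu>))"

end

(*
  Choose a fine finite net F of X and a partition of unity (phi_j) subordinate to it. The
  matrix A i j = B_q phi_j (i) is nonnegative with row sums q_i(Theta) in [c, C]. Normalised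
  Cesaro averages of the row vectors 1 A^n / g^n, where g is the growth rate of A^n, are
  probability vectors w on F with w A close to g w; hence the probability measure with weights
  w satisfies  integral B_q f ~ g * integral f  up to the modulus of continuity of f. Refining
  the net and passing to a weakly convergent subsequence yields a probability measure nu and
  rho >= inf_x q_x(Theta) > 0 with  integral B_q f d nu = rho * integral f d nu  for all
  continuous f, i.e. L_q nu = rho nu. Applying this to B_q^n 1 gives
  rho^n = integral B_q^n 1 d nu <= norm (B_q^n), so rho is at most the spectral radius.

  Weak compactness of probability measures on X is reduced to Helly's selection theorem on
  the real line by writing X as a continuous image of a compact set of reals, via a
  Cantor-type coding of nested nets.
*)

theory Submission
  imports Defs
begin

section \<open>Approximate left eigenvectors of nonnegative matrices\<close>

lemma pow_le_const_mult_pow_imp_le: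
  fixes x y K :: real
  assumes "0 < y" and "\<And>n. x ^ n \<le> K * y ^ n"
  shows "x \<le> y"
proof (rule ccontr)
  assume "\<not> x \<le> y"
  then have "1 < x / y" using \<open>0 < y\<close> by simp
  then obtain n where "K < (x / y) ^ n" using real_arch_pow by blast
  then have "K * y ^ n < x ^ n" using \<open>0 < y\<close> by (simp add: power_divide field_simps)
  with assms(2)[of n] show False by simp
qed

lemma partial_sums_exponential_growth:
  fixes b :: "nat \<Rightarrow> real"
  assumes "0 \<le> e" and big: "\<And>M. N \<le> M \<Longrightarrow> e * (\<Sum>n<M. b n) < b M"
  shows "(1 + e) ^ k * (\<Sum>n<N. b n) \<le> (\<Sum>n<N + k. b n)"
proof (induction k)
  case (Suc k)
  have "(1 + e) ^ Suc k * (\<Sum>n<N. b n) \<le> (1 + e) * (\<Sum>n<N + k. b n)"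
    using mult_left_mono[OF Suc] \<open>0 \<le> e\<close> by (simp add: mult.assoc)
  also have "\<dots> \<le> (\<Sum>n<N + k. b n) + b (N + k)"
    using big[of "N + k"] by (simp add: algebra_simps)
  finally show ?case by simp
qed simp

(* If b M always exceeded an e-fraction of the preceding partial sum, the partial sums and
   hence b would grow like (1 + e)^M. *)
lemma exists_term_le_partial_sum:
  fixes b :: "nat \<Rightarrow> real"
  assumes "0 < e" and b_ge: "\<And>n. 1 \<le> b n"
    and subexp: "\<And>q. 1 < q \<Longrightarrow> \<exists>m\<ge>1. \<exists>K. \<forall>j. b (j * m) \<le> K * q ^ (j * m)"
  shows "\<exists>M\<ge>M0. b M \<le> e * (\<Sum>n<M. b n)"
proof (rule ccontr)
  assume "\<not> ?thesis"
  then have big: "e * (\<Sum>n<M. b n) < b M" if "M0 \<le> M" for M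
    using that by force
  define N where "N = Suc M0"
  have "1 \<le> (\<Sum>n<N. b n)"
    using b_ge[of 0] b_ge order_trans[OF zero_le_one b_ge]
    by (intro order_trans[OF _ member_le_sum]) (auto simp: N_def)
  have b_big: "e * (1 + e) ^ k < b (N + k)" for k
  proof -
    have "(1 + e) ^ k \<le> (1 + e) ^ k * (\<Sum>n<N. b n)"
      using mult_left_mono[OF \<open>1 \<le> (\<Sum>n<N. b n)\<close>, of "(1 + e) ^ k"] \<open>0 < e\<close> by simp
    also have "\<dots> \<le> (\<Sum>n<N + k. b n)"
      using \<open>0 < e\<close> big by (intro partial_sums_exponential_growth) (auto simp: N_def)
    finally have "e * (1 + e) ^ k \<le> e * (\<Sum>n<N + k. b n)" using \<open>0 < e\<close> by simp
    also have "\<dots> < b (N + k)" by (rule big) (simp add: N_def)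
    finally show ?thesis .
  qed
  define q where "q = sqrt (1 + e)"
  have "1 < q" and q_sq: "q ^ 2 = 1 + e" unfolding q_def using \<open>0 < e\<close> by auto
  then obtain m K where "m \<ge> 1" and b_le: "\<And>j. b (j * m) \<le> K * q ^ (j * m)"
    using subexp by blast
  obtain n where n: "K * q ^ N / e < q ^ n" using real_arch_pow[OF \<open>1 < q\<close>] by blast
  define k where "k = (N + n) * m - N"
  have "N + n \<le> (N + n) * m" using \<open>m \<ge> 1\<close> by simp
  then have k: "(N + n) * m = N + k" and "n \<le> k" unfolding k_def by linarith+
  have "e * q ^ k * q ^ k = e * (1 + e) ^ k"
    by (simp add: q_sq[symmetric] power_mult_distrib[symmetric] power2_eq_square)
  also have "\<dots> < K * q ^ N * q ^ k"
    using b_big[of k] b_le[of "N + n"] by (simp add: k power_add mult.assoc)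
  finally have "e * q ^ k < K * q ^ N" using \<open>1 < q\<close> by simp
  moreover have "q ^ n \<le> q ^ k" using \<open>n \<le> k\<close> \<open>1 < q\<close> by (simp add: power_increasing)
  ultimately have "e * q ^ n < K * q ^ N" using \<open>0 < e\<close>
    by (meson le_less_trans mult_left_mono less_imp_le)
  then show False using n \<open>0 < e\<close> by (simp add: field_simps)
qed

definition vec_mat :: "'a set \<Rightarrow> ('a \<Rightarrow> 'a \<Rightarrow> real) \<Rightarrow> ('a \<Rightarrow> real) \<Rightarrow> 'a \<Rightarrow> real" where
  "vec_mat F A v j = (\<Sum>i\<in>F. v i * A i j)"

definition mat_vec :: "'a set \<Rightarrow> ('a \<Rightarrow> 'a \<Rightarrow> real) \<Rightarrow> ('a \<Rightarrow> real) \<Rightarrow> 'a \<Rightarrow> real" where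
  "mat_vec F A u i = (\<Sum>j\<in>F. A i j * u j)"

lemma sum_vec_mat_mult: "(\<Sum>j\<in>F. vec_mat F A v j * u j) = (\<Sum>i\<in>F. v i * mat_vec F A u i)"
proof -
  have "(\<Sum>j\<in>F. vec_mat F A v j * u j) = (\<Sum>j\<in>F. \<Sum>i\<in>F. v i * (A i j * u j))"
    unfolding vec_mat_def by (simp add: sum_distrib_right mult.assoc)
  also have "\<dots> = (\<Sum>i\<in>F. \<Sum>j\<in>F. v i * (A i j * u j))" by (rule sum.swap)
  finally show ?thesis unfolding mat_vec_def by (simp add: sum_distrib_left)
qed

lemma sum_funpow_vec_mat_mult:
  "(\<Sum>j\<in>F. (vec_mat F A ^^ n) v j * u j) = (\<Sum>i\<in>F. v i * (mat_vec F A ^^ n) u i)"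
proof (induction n arbitrary: v)
  case (Suc n)
  have "(\<Sum>j\<in>F. (vec_mat F A ^^ Suc n) v j * u j) = (\<Sum>i\<in>F. vec_mat F A v i * (mat_vec F A ^^ n) u i)"
    by (simp only: funpow_Suc_right o_apply Suc)
  also have "\<dots> = (\<Sum>i\<in>F. v i * (mat_vec F A ^^ Suc n) u i)"
    by (simp only: sum_vec_mat_mult funpow.simps o_apply)
  finally show ?case .
qed simp

lemma vec_mat_sum:
  "vec_mat F A (\<lambda>j. \<Sum>k\<in>S. a k * f k j) = (\<lambda>j. \<Sum>k\<in>S. a k * vec_mat F A (f k) j)"
proof
  fix j
  have "vec_mat F A (\<lambda>j. \<Sum>k\<in>S. a k * f k j) j = (\<Sum>i\<in>F. \<Sum>k\<in>S. a k * (f k i * A i j))"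
    unfolding vec_mat_def by (simp add: sum_distrib_right mult.assoc)
  also have "\<dots> = (\<Sum>k\<in>S. \<Sum>i\<in>F. a k * (f k i * A i j))" by (rule sum.swap)
  finally show "vec_mat F A (\<lambda>j. \<Sum>k\<in>S. a k * f k j) j = (\<Sum>k\<in>S. a k * vec_mat F A (f k) j)"
    unfolding vec_mat_def by (simp add: sum_distrib_left)
qed

lemma vec_mat_scale: "vec_mat F A (\<lambda>j. a * v j) = (\<lambda>j. a * vec_mat F A v j)"
  unfolding vec_mat_def by (simp add: sum_distrib_left mult.assoc)

locale row_bounded_matrix =
  fixes F :: "'a set" and A :: "'a \<Rightarrow> 'a \<Rightarrow> real" and c C :: real
  assumes finite_F: "finite F" and F_nonempty: "F \<noteq> {}" and c_pos: "0 < c"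
    and A_nonneg: "\<And>i j. i \<in> F \<Longrightarrow> j \<in> F \<Longrightarrow> 0 \<le> A i j"
    and row_sum_ge: "\<And>i. i \<in> F \<Longrightarrow> c \<le> (\<Sum>j\<in>F. A i j)"
    and row_sum_le: "\<And>i. i \<in> F \<Longrightarrow> (\<Sum>j\<in>F. A i j) \<le> C"
begin

lemma funpow_vec_mat_nonneg:
  "(\<And>i. i \<in> F \<Longrightarrow> 0 \<le> v i) \<Longrightarrow> j \<in> F \<Longrightarrow> 0 \<le> (vec_mat F A ^^ n) v j"
  by (induction n arbitrary: j) (auto simp: vec_mat_def A_nonneg intro!: sum_nonneg)

lemma funpow_mat_vec_nonneg:
  "(\<And>j. j \<in> F \<Longrightarrow> 0 \<le> u j) \<Longrightarrow> i \<in> F \<Longrightarrow> 0 \<le> (mat_vec F A ^^ n) u i"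
  by (induction n arbitrary: i) (auto simp: mat_vec_def A_nonneg intro!: sum_nonneg)

lemma sum_vec_mat_bounds:
  assumes "\<And>i. i \<in> F \<Longrightarrow> 0 \<le> v i"
  shows "c * sum v F \<le> sum (vec_mat F A v) F" "sum (vec_mat F A v) F \<le> C * sum v F"
proof -
  have eq: "sum (vec_mat F A v) F = (\<Sum>i\<in>F. v i * (\<Sum>j\<in>F. A i j))"
    using sum_vec_mat_mult[of F A v "\<lambda>_. 1"] by (simp add: mat_vec_def)
  have "c * v i \<le> v i * (\<Sum>j\<in>F. A i j)" "v i * (\<Sum>j\<in>F. A i j) \<le> C * v i" if "i \<in> F" for i
    using mult_right_mono[OF row_sum_ge[OF that] assms[OF that]]
      mult_right_mono[OF row_sum_le[OF that] assms[OF that]] by (simp_all add: ac_simps)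
  then show "c * sum v F \<le> sum (vec_mat F A v) F" "sum (vec_mat F A v) F \<le> C * sum v F"
    unfolding eq sum_distrib_left by (auto intro: sum_mono)
qed

definition mass :: "nat \<Rightarrow> real" where
  "mass n = sum ((vec_mat F A ^^ n) (\<lambda>_. 1)) F"

lemma c_le_C: "c \<le> C"
proof -
  obtain i where "i \<in> F" using F_nonempty by blast
  then show ?thesis using row_sum_ge row_sum_le by (blast intro: order_trans)
qed

lemma mass_bounds: "c ^ n * card F \<le> mass n" "mass n \<le> C ^ n * card F"
proof -
  have nonneg: "\<And>i. i \<in> F \<Longrightarrow> 0 \<le> (vec_mat F A ^^ n) (\<lambda>_. 1) i" for n
    by (rule funpow_vec_mat_nonneg) simp
  show "c ^ n * card F \<le> mass n"
  proof (induction n)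
    case (Suc n)
    then have "c ^ Suc n * card F \<le> c * mass n" using c_pos by simp
    also have "\<dots> \<le> mass (Suc n)"
      unfolding mass_def by (simp add: sum_vec_mat_bounds(1)[OF nonneg])
    finally show ?case .
  qed (simp add: mass_def)
  show "mass n \<le> C ^ n * card F"
  proof (induction n)
    case (Suc n)
    have "0 \<le> C" using c_le_C c_pos by simp
    have "mass (Suc n) \<le> C * mass n"
      unfolding mass_def by (simp add: sum_vec_mat_bounds(2)[OF nonneg])
    also have "\<dots> \<le> C ^ Suc n * card F" using mult_left_mono[OF Suc \<open>0 \<le> C\<close>] by (simp add: mult.assoc)
    finally show ?case .
  qed (simp add: mass_def)
qed

lemma card_F_ge_1: "1 \<le> card F"
  using finite_F F_nonempty by (simp add: Suc_le_eq card_gt_0_iff)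

lemma pow_c_le_mass: "c ^ n \<le> mass n"
proof -
  have "c ^ n * 1 \<le> c ^ n * card F" using card_F_ge_1 c_pos by (intro mult_left_mono) auto
  then show ?thesis using mass_bounds(1)[of n] by simp
qed

lemma mass_pos: "0 < mass n"
  using pow_c_le_mass[of n] zero_less_power[OF c_pos, of n] by linarith

lemma mass_add_le: "mass (n + m) \<le> mass n * mass m"
proof -
  let ?v = "(vec_mat F A ^^ n) (\<lambda>_. 1)" and ?u = "(mat_vec F A ^^ m) (\<lambda>_. 1)"
  have mass_eq: "mass m = sum ?u F"
    using sum_funpow_vec_mat_mult[where n=m and v="\<lambda>_. 1" and u="\<lambda>_. 1"] by (simp add: mass_def)
  have "mass (n + m) = (\<Sum>j\<in>F. (vec_mat F A ^^ m) ?v j * 1)"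
    by (simp add: mass_def funpow_add add.commute)
  also have "\<dots> = (\<Sum>i\<in>F. ?v i * ?u i)" by (rule sum_funpow_vec_mat_mult)
  also have "\<dots> \<le> (\<Sum>i\<in>F. ?v i * mass m)"
    unfolding mass_eq using finite_F
    by (intro sum_mono mult_left_mono member_le_sum funpow_vec_mat_nonneg funpow_mat_vec_nonneg) auto
  finally show ?thesis by (simp add: mass_def sum_distrib_right)
qed

lemma mass_mult_le: "mass (k * m) \<le> card F * mass m ^ k"
proof (induction k)
  case (Suc k)
  have "mass (Suc k * m) \<le> mass m * mass (k * m)"
    using mass_add_le[of m "k * m"] by simp
  also have "\<dots> \<le> mass m * (card F * mass m ^ k)"
    using Suc mass_pos[of m] by (intro mult_left_mono) auto
  finally show ?case by (simp add: algebra_simps)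
qed (simp add: mass_def)

(* The spectral radius of A, by Gelfand's formula: mass n, the sum of all entries of A^n, is
   comparable to the norm of A^n. *)
definition growth :: real where
  "growth = (INF n\<in>{1..}. root n (mass n))"

lemma c_le_root_mass: "1 \<le> n \<Longrightarrow> c \<le> root n (mass n)"
proof -
  assume "1 \<le> n"
  have "c = root n (c ^ n)" using \<open>1 \<le> n\<close> c_pos by (simp add: real_root_power_cancel)
  also have "\<dots> \<le> root n (mass n)"
    using \<open>1 \<le> n\<close> pow_c_le_mass by (intro real_root_le_mono) auto
  finally show ?thesis .
qed

lemma bdd_below_root_mass: "bdd_below ((\<lambda>n. root n (mass n)) ` {1..})"
  using c_le_root_mass by (intro bdd_belowI[of _ c]) auto

lemma c_le_growth: "c \<le> growth"
  unfolding growth_def by (rule cINF_greatest) (auto intro: c_le_root_mass)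

lemma growth_pos: "0 < growth"
  using c_le_growth c_pos by simp

lemma growth_pow_le_mass: "growth ^ n \<le> mass n"
proof (cases "n = 0")
  case True
  then show ?thesis using card_F_ge_1 by (simp add: mass_def)
next
  case False
  then have "growth \<le> root n (mass n)"
    unfolding growth_def by (intro cINF_lower[OF bdd_below_root_mass]) auto
  then have "growth ^ n \<le> root n (mass n) ^ n" using growth_pos by (intro power_mono) auto
  also have "\<dots> = mass n" using False mass_pos[of n] by simp
  finally show ?thesis .
qed

lemma growth_le_C: "growth \<le> C"
proof (rule pow_le_const_mult_pow_imp_le)
  show "0 < C" using c_le_C c_pos by simp
  show "growth ^ n \<le> card F * C ^ n" for n
    using growth_pow_le_mass[of n] mass_bounds(2)[of n] by (simp add: mult.commute)
qed

lemma exists_mass_lt_pow: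
  assumes "1 < q"
  obtains m where "1 \<le> m" "mass m < (growth * q) ^ m"
proof -
  have "growth < growth * q" using assms growth_pos by simp
  then obtain m where m: "1 \<le> m" "root m (mass m) < growth * q"
    unfolding growth_def using bdd_below_root_mass by (subst (asm) cINF_less_iff) auto
  have "mass m = root m (mass m) ^ m" using m(1) mass_pos[of m] by simp
  also have "\<dots> < (growth * q) ^ m"
    using m mass_pos[of m] by (intro power_strict_mono) auto
  finally show ?thesis using m(1) that by blast
qed

definition normalized_pow :: "nat \<Rightarrow> 'a \<Rightarrow> real" where
  "normalized_pow n j = 1 / growth ^ n * (vec_mat F A ^^ n) (\<lambda>_. 1) j"

lemma normalized_pow_nonneg: "j \<in> F \<Longrightarrow> 0 \<le> normalized_pow n j"
  unfolding normalized_pow_def using growth_pos by (simp add: funpow_vec_mat_nonneg)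

lemma vec_mat_normalized_pow: "vec_mat F A (normalized_pow n) = (\<lambda>j. growth * normalized_pow (Suc n) j)"
  unfolding normalized_pow_def[abs_def] vec_mat_scale using growth_pos by (simp add: field_simps)

lemma sum_normalized_pow: "sum (normalized_pow n) F = mass n / growth ^ n"
  by (simp add: normalized_pow_def mass_def sum_divide_distrib[symmetric])

lemma one_le_sum_normalized_pow: "1 \<le> sum (normalized_pow n) F"
  using growth_pow_le_mass[of n] growth_pos by (simp add: sum_normalized_pow)

lemma sum_normalized_pow_subexponential:
  assumes "1 < q"
  shows "\<exists>m\<ge>1. \<exists>K. \<forall>j. sum (normalized_pow (j * m)) F \<le> K * q ^ (j * m)"
proof -
  obtain m where m: "1 \<le> m" "mass m < (growth * q) ^ m" using exists_mass_lt_pow[OF assms] by blast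
  have "sum (normalized_pow (j * m)) F \<le> card F * q ^ (j * m)" for j
  proof -
    have "mass (j * m) \<le> card F * mass m ^ j" by (rule mass_mult_le)
    also have "\<dots> \<le> card F * ((growth * q) ^ m) ^ j"
      using m mass_pos[of m] by (intro mult_left_mono power_mono) auto
    also have "\<dots> = growth ^ (j * m) * (card F * q ^ (j * m))"
      by (simp add: power_mult_distrib power_mult[symmetric] mult.commute)
    finally show ?thesis using growth_pos by (simp add: sum_normalized_pow field_simps)
  qed
  then show ?thesis using m(1) by blast
qed

lemma cesaro_average_defect_le:
  fixes a :: real and M :: nat
  assumes "0 \<le> a"
  defines "w \<equiv> \<lambda>j. \<Sum>n<M. a * normalized_pow n j"
  shows "(\<Sum>j\<in>F. \<bar>vec_mat F A w j - growth * w j\<bar>) \<le> growth * a * (sum (normalized_pow M) F + card F)"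
proof -
  let ?h = normalized_pow
  have telescope: "vec_mat F A w j - growth * w j = growth * a * (?h M j - ?h 0 j)" for j
  proof -
    have "vec_mat F A w j - growth * w j = growth * a * (\<Sum>n<M. ?h (Suc n) j - ?h n j)"
      unfolding w_def vec_mat_sum vec_mat_normalized_pow
      by (simp add: sum_subtractf sum_distrib_left right_diff_distrib mult_ac)
    then show ?thesis using sum_lessThan_telescope[of "\<lambda>n. ?h n j" M] by simp
  qed
  have "(\<Sum>j\<in>F. \<bar>vec_mat F A w j - growth * w j\<bar>) \<le> (\<Sum>j\<in>F. growth * a * (?h M j + ?h 0 j))"
  proof (intro sum_mono)
    fix j assume "j \<in> F"
    have "\<bar>?h M j - ?h 0 j\<bar> \<le> ?h M j + ?h 0 j"
      using normalized_pow_nonneg[OF \<open>j \<in> F\<close>, of M] normalized_pow_nonneg[OF \<open>j \<in> F\<close>, of 0] by linarith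
    then show "\<bar>vec_mat F A w j - growth * w j\<bar> \<le> growth * a * (?h M j + ?h 0 j)"
      unfolding telescope using growth_pos \<open>0 \<le> a\<close> by (simp add: abs_mult mult_left_mono)
  qed
  also have "\<dots> = growth * a * (sum (?h M) F + card F)"
    using sum_normalized_pow[of 0] by (simp add: sum.distrib sum_distrib_left[symmetric] mass_def)
  finally show ?thesis .
qed

lemma exists_approx_left_eigenvector:
  assumes "0 < e"
  obtains w where "\<And>i. i \<in> F \<Longrightarrow> 0 \<le> w i" "sum w F = 1"
    "(\<Sum>j\<in>F. \<bar>vec_mat F A w j - growth * w j\<bar>) \<le> e"
proof -
  define b where "b n = sum (normalized_pow n) F" for n
  define e' where "e' = e / (2 * growth)"
  have "0 < e'" using assms growth_pos by (simp add: e'_def)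
  define M0 where "M0 = max 1 (nat \<lceil>2 * growth * card F / e\<rceil>)"
  obtain M where "M0 \<le> M" and b_M: "b M \<le> e' * (\<Sum>n<M. b n)"
    using exists_term_le_partial_sum[OF \<open>0 < e'\<close> one_le_sum_normalized_pow sum_normalized_pow_subexponential]
    unfolding b_def by blast
  define S where "S = (\<Sum>n<M. b n)"
  have "real M \<le> S"
    using sum_mono[of "{..<M}" "\<lambda>_. 1" b] one_le_sum_normalized_pow by (simp add: S_def b_def)
  then have S_ge: "2 * growth * card F / e \<le> S" and "0 < S"
    using \<open>M0 \<le> M\<close> unfolding M0_def by linarith+
  (* A Cesaro average: by the choice of M, the two terms of its telescoping defect are
     negligible compared to S. *)
  define w where "w j = (\<Sum>n<M. 1 / S * normalized_pow n j)" for j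
  have "0 \<le> w i" if "i \<in> F" for i
    unfolding w_def using normalized_pow_nonneg[OF that] \<open>0 < S\<close> by (intro sum_nonneg) simp
  moreover have "sum w F = 1"
  proof -
    have "sum w F = 1 / S * (\<Sum>n<M. sum (normalized_pow n) F)"
      unfolding w_def by (subst sum.swap) (simp only: sum_distrib_left)
    then show ?thesis using \<open>0 < S\<close> by (simp add: b_def S_def)
  qed
  moreover have "(\<Sum>j\<in>F. \<bar>vec_mat F A w j - growth * w j\<bar>) \<le> e"
  proof -
    have "(\<Sum>j\<in>F. \<bar>vec_mat F A w j - growth * w j\<bar>) \<le> growth * (1 / S) * (b M + card F)"
      using cesaro_average_defect_le[of "1 / S" M] \<open>0 < S\<close> unfolding w_def[abs_def] b_def by simp
    also have "\<dots> = growth / S * b M + growth * card F / S" by (simp add: algebra_simps)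
    also have "\<dots> \<le> e / 2 + e / 2"
    proof (rule add_mono)
      show "growth / S * b M \<le> e / 2"
        using b_M growth_pos \<open>0 < S\<close> by (simp add: S_def e'_def field_simps)
      show "growth * card F / S \<le> e / 2"
        using S_ge \<open>0 < S\<close> assms by (simp add: field_simps)
    qed
    finally show ?thesis by simp
  qed
  ultimately show ?thesis using that by blast
qed

end

section \<open>Compact metric spaces as continuous images of compact sets of reals\<close>

lemma compact_exists_finite_net:
  assumes "compact (UNIV :: 'x::metric_space set)" "0 < r"
  obtains N :: nat and p :: "nat \<Rightarrow> 'x::metric_space" where "0 < N" "\<And>x. \<exists>i<N. dist x (p i) < r"
proof -
  obtain k :: "'x set" where k: "finite k" "UNIV \<subseteq> (\<Union>x\<in>k. ball x r)"
    using assms seq_compact_imp_totally_bounded[of "UNIV :: 'x set"] compact_imp_seq_compact by blast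
  obtain N :: nat and p where Np: "k = p ` {i. i < N}" using finite_imp_nat_seg_image_inj_on[OF k(1)] by blast
  have near: "\<exists>i<N. dist x (p i) < r" for x
  proof -
    have "x \<in> (\<Union>x\<in>k. ball x r)" using k(2) by blast
    then obtain y where "y \<in> k" "dist y x < r" by auto
    then show ?thesis using Np by (auto simp: dist_commute)
  qed
  obtain i where "i < N" using near[of undefined] by blast
  then have "0 < N" by simp
  then show ?thesis using near by (rule that)
qed

(* A point of X is coded by a sequence of indices s n such that the points pts n (s n) of the
   (1/2)^n-nets converge to it; the real number code s = (SUM n. s n * weight n) determines s. *)
locale net_coding =
  fixes cnt :: "nat \<Rightarrow> nat" and pts :: "nat \<Rightarrow> nat \<Rightarrow> 'x::metric_space"
  assumes cnt_pos: "\<And>n. 0 < cnt n"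
    and net: "\<And>n x. \<exists>i<cnt n. dist x (pts n i) < (1/2) ^ n"
    and UNIV_complete: "Topological_Spaces.complete (UNIV :: 'x set)"
begin

(* weight n is three times larger than the largest total contribution of all later digits,
   so codes are separated by the first digit in which they differ. *)
definition weight :: "nat \<Rightarrow> real" where
  "weight n = (\<Prod>k\<le>n. 1 / (4 * cnt k))"

lemma weight_0: "weight 0 = 1 / (4 * cnt 0)"
  by (simp add: weight_def)

lemma weight_Suc: "weight (Suc n) = weight n / (4 * cnt (Suc n))"
  by (simp add: weight_def prod.atMost_Suc)

lemma weight_pos: "0 < weight n"
  unfolding weight_def using cnt_pos by (intro prod_pos) simp

lemma cnt_weight_Suc: "cnt (Suc n) * weight (Suc n) = weight n / 4"
  using cnt_pos[of "Suc n"] by (simp add: weight_Suc)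

lemma weight_Suc_le: "weight (Suc n) \<le> weight n / 4"
  unfolding weight_Suc using weight_pos[of n] cnt_pos[of "Suc n"]
  by (intro divide_left_mono) (auto simp: Suc_le_eq)

lemma weight_le: "weight n \<le> (1/4) ^ n"
proof (induction n)
  case 0 then show ?case using cnt_pos[of 0] by (simp add: weight_0)
next
  case (Suc n) then show ?case using weight_Suc_le[of n] by simp
qed

lemma weight_add_le: "weight (n + k) \<le> weight n * (1/4) ^ k"
proof (induction k)
  case (Suc k) then show ?case using weight_Suc_le[of "n + k"] by simp
qed simp

lemma weight_antimono: "n \<le> m \<Longrightarrow> weight m \<le> weight n"
proof (rule lift_Suc_antimono_le)
  show "weight (Suc k) \<le> weight k" for k using weight_Suc_le[of k] weight_pos[of k] by simp
qed

lemma weight_tendsto_0: "weight \<longlonglongrightarrow> 0"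
proof (rule tendsto_sandwich[of "\<lambda>_. 0" _ _ "\<lambda>n. (1/4::real) ^ n"])
  show "\<forall>\<^sub>F n in sequentially. 0 \<le> weight n" using weight_pos by (simp add: less_imp_le)
  show "\<forall>\<^sub>F n in sequentially. weight n \<le> (1/4) ^ n" using weight_le by simp
  show "(\<lambda>n. (1/4::real) ^ n) \<longlonglongrightarrow> 0" by (rule LIMSEQ_power_zero) simp
qed simp

lemma cnt_weight_le: "cnt n * weight n \<le> (1/4) ^ n"
proof (cases n)
  case 0 then show ?thesis using cnt_pos[of 0] by (simp add: weight_0)
next
  case (Suc m) then show ?thesis using cnt_weight_Suc[of m] weight_le[of m] by simp
qed

lemma summable_cnt_weight: "summable (\<lambda>n. cnt n * weight n)"
proof (rule summable_comparison_test'[of "\<lambda>n. (1/4::real) ^ n" 0])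
  show "summable (\<lambda>n. (1/4::real) ^ n)" by (simp add: summable_geometric)
  show "norm (cnt n * weight n) \<le> (1/4) ^ n" for n
    using cnt_weight_le[of n] weight_pos[of n] by simp
qed

lemma cnt_weight_tail_le: "(\<Sum>k. cnt (k + Suc n) * weight (k + Suc n)) \<le> weight n / 3"
proof -
  have "(\<lambda>k. cnt (k + Suc n) * weight (k + Suc n)) = (\<lambda>k. weight (n + k) / 4)"
  proof
    show "cnt (k + Suc n) * weight (k + Suc n) = weight (n + k) / 4" for k
      using cnt_weight_Suc[of "n + k"] by (simp add: add.commute)
  qed
  then have "(\<Sum>k. cnt (k + Suc n) * weight (k + Suc n)) = (\<Sum>k. weight (n + k) / 4)"
    by (rule arg_cong)
  also have "\<dots> \<le> (\<Sum>k. weight n / 4 * (1/4) ^ k)"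
  proof (rule suminf_le)
    show le: "weight (n + k) / 4 \<le> weight n / 4 * (1/4) ^ k" for k
      using weight_add_le[of n k] by simp
    show summable: "summable (\<lambda>k. weight n / 4 * (1/4::real) ^ k)"
      by (intro summable_mult summable_geometric) simp
    show "summable (\<lambda>k. weight (n + k) / 4)"
      by (rule summable_comparison_test'[OF summable, of 0]) (use le weight_pos in \<open>auto simp: less_imp_le\<close>)
  qed
  also have "\<dots> = weight n / 4 * (\<Sum>k. (1/4::real) ^ k)"
    by (rule suminf_mult) (simp add: summable_geometric)
  also have "\<dots> = weight n / 3"
    by (simp add: suminf_geometric)
  finally show ?thesis .
qed

definition digit_seq :: "(nat \<Rightarrow> nat) \<Rightarrow> bool" where
  "digit_seq s \<longleftrightarrow> (\<forall>n. s n < cnt n)"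

definition code :: "(nat \<Rightarrow> nat) \<Rightarrow> real" where
  "code s = (\<Sum>n. real (s n) * weight n)"

lemma digit_diff_le:
  assumes "digit_seq s" "digit_seq s'"
  shows "\<bar>(real (s n) - real (s' n)) * weight n\<bar> \<le> cnt n * weight n"
proof -
  have "real (s n) < cnt n" "real (s' n) < cnt n" "0 \<le> real (s n)" "0 \<le> real (s' n)"
    using assms unfolding digit_seq_def by auto
  then have "\<bar>real (s n) - real (s' n)\<bar> \<le> cnt n" by linarith
  then show ?thesis using weight_pos[of n] by (simp add: abs_mult)
qed

lemma summable_digits: "digit_seq s \<Longrightarrow> summable (\<lambda>n. real (s n) * weight n)"
  by (rule summable_comparison_test'[OF summable_cnt_weight, of 0])
     (use weight_pos in \<open>auto simp: digit_seq_def less_imp_le\<close>)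

lemma code_diff_initial_segment:
  assumes "digit_seq s" "digit_seq s'"
  shows "\<bar>code s - code s' - (\<Sum>i<Suc n. (real (s i) - real (s' i)) * weight i)\<bar> \<le> weight n / 3"
proof -
  define d where "d i = (real (s i) - real (s' i)) * weight i" for i
  have "summable d"
    using summable_diff[OF summable_digits[OF assms(1)] summable_digits[OF assms(2)]]
    unfolding d_def left_diff_distrib .
  have "code s - code s' = suminf d"
    unfolding code_def d_def left_diff_distrib
    by (rule suminf_diff[OF summable_digits[OF assms(1)] summable_digits[OF assms(2)]])
  then have "code s - code s' - (\<Sum>i<Suc n. d i) = (\<Sum>k. d (k + Suc n))"
    using suminf_split_initial_segment[OF \<open>summable d\<close>, of "Suc n"] by simp
  also have "\<bar>\<dots>\<bar> \<le> (\<Sum>k. cnt (k + Suc n) * weight (k + Suc n))"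
  proof -
    have "norm (\<Sum>k. d (k + Suc n)) \<le> (\<Sum>k. cnt (k + Suc n) * weight (k + Suc n))"
    proof (rule norm_suminf_le)
      show "norm (d (k + Suc n)) \<le> cnt (k + Suc n) * weight (k + Suc n)" for k
        using digit_diff_le[OF assms] by (simp add: d_def)
      show "summable (\<lambda>k. cnt (k + Suc n) * weight (k + Suc n))"
        using summable_cnt_weight by (subst summable_iff_shift)
    qed
    then show ?thesis by simp
  qed
  also have "\<dots> \<le> weight n / 3" by (rule cnt_weight_tail_le)
  finally show ?thesis by (simp add: d_def)
qed

lemma code_close:
  assumes "digit_seq s" "digit_seq s'" "\<forall>k\<le>n. s k = s' k"
  shows "\<bar>code s - code s'\<bar> \<le> weight n / 3"
  using code_diff_initial_segment[OF assms(1,2), of n] assms(3) by simp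

lemma code_separated:
  assumes "digit_seq s" "digit_seq s'" "\<forall>k<n. s k = s' k" "s n \<noteq> s' n"
  shows "2 * weight n / 3 \<le> \<bar>code s - code s'\<bar>"
proof -
  have "1 \<le> \<bar>real (s n) - real (s' n)\<bar>" using assms(4) by linarith
  then have "weight n \<le> \<bar>(real (s n) - real (s' n)) * weight n\<bar>"
    using mult_right_mono[of 1 _ "weight n"] weight_pos[of n] by (simp add: abs_mult)
  moreover have "\<bar>(real (s n) - real (s' n)) * weight n\<bar> \<le> weight n / 3 + \<bar>code s - code s'\<bar>"
    using code_diff_initial_segment[OF assms(1,2), of n] assms(3)
      abs_triangle_ineq4[of "code s - code s'" "code s - code s' - (real (s n) - real (s' n)) * weight n"]
    by simp
  ultimately show ?thesis by linarith
qed

lemma agree_if_code_close: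
  assumes "digit_seq s" "digit_seq s'" "\<bar>code s - code s'\<bar> < 2 * weight n / 3"
  shows "\<forall>k\<le>n. s k = s' k"
proof (rule ccontr)
  assume "\<not> ?thesis"
  then obtain m where m: "m \<le> n" "s m \<noteq> s' m" by blast
  then obtain k where k: "s k \<noteq> s' k" "\<forall>j<k. s j = s' j"
    using exists_least_iff[of "\<lambda>k. s k \<noteq> s' k"] by blast
  then have "k \<le> n" using m by (meson le_trans not_le)
  with k have "2 * weight k / 3 \<le> \<bar>code s - code s'\<bar>" using code_separated[OF assms(1,2)] by blast
  moreover have "weight n \<le> weight k" using weight_antimono[OF \<open>k \<le> n\<close>] .
  ultimately show False using assms(3) by linarith
qed

lemma code_inj:
  assumes "digit_seq s" "digit_seq s'" "code s = code s'"
  shows "s = s'"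
proof
  fix n
  have "\<bar>code s - code s'\<bar> < 2 * weight n / 3" using assms(3) weight_pos[of n] by simp
  then show "s n = s' n" using agree_if_code_close[OF assms(1,2)] by blast
qed

definition admissible :: "(nat \<Rightarrow> nat) \<Rightarrow> bool" where
  "admissible s \<longleftrightarrow> digit_seq s \<and>
     (\<forall>n. dist (pts n (s n)) (pts (Suc n) (s (Suc n))) < 2 * (1/2) ^ n)"

lemma admissible_digit_seq: "admissible s \<Longrightarrow> digit_seq s"
  by (simp add: admissible_def)

lemma admissible_dist_le:
  assumes "admissible s" "n \<le> m"
  shows "dist (pts n (s n)) (pts m (s m)) \<le> 4 * (1/2) ^ n - 4 * (1/2) ^ m"
  using assms(2)
proof (induction m rule: dec_induct)
  case (step m)
  have "dist (pts m (s m)) (pts (Suc m) (s (Suc m))) < 2 * (1/2) ^ m"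
    using assms(1) by (simp add: admissible_def)
  then show ?case using step.IH dist_triangle[of "pts n (s n)" "pts (Suc m) (s (Suc m))" "pts m (s m)"]
    by simp
qed simp

lemma admissible_Cauchy: "admissible s \<Longrightarrow> Cauchy (\<lambda>n. pts n (s n))"
proof (rule metric_CauchyI)
  fix e :: real assume "admissible s" "0 < e"
  obtain M where M: "(1/2::real) ^ M < e / 8" using real_arch_pow_inv[of "e / 8" "1/2"] \<open>0 < e\<close> by auto
  have "dist (pts m (s m)) (pts n (s n)) < e" if "M \<le> m" "M \<le> n" for m n
  proof -
    have "dist (pts m (s m)) (pts n (s n)) \<le> dist (pts M (s M)) (pts m (s m)) + dist (pts M (s M)) (pts n (s n))"
      by (rule dist_triangle3)
    also have "\<dots> \<le> 8 * (1/2) ^ M"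
      using admissible_dist_le[OF \<open>admissible s\<close> that(1)] admissible_dist_le[OF \<open>admissible s\<close> that(2)]
        zero_le_power[of "1/2::real" m] zero_le_power[of "1/2::real" n]
      by linarith
    finally show ?thesis using M by simp
  qed
  then show "\<exists>M. \<forall>m\<ge>M. \<forall>n\<ge>M. dist (pts m (s m)) (pts n (s n)) < e" by blast
qed

definition limit_point :: "(nat \<Rightarrow> nat) \<Rightarrow> 'x" where
  "limit_point s = lim (\<lambda>n. pts n (s n))"

lemma limit_point: "admissible s \<Longrightarrow> (\<lambda>n. pts n (s n)) \<longlonglongrightarrow> limit_point s"
proof -
  assume "admissible s"
  then obtain l where "(\<lambda>n. pts n (s n)) \<longlonglongrightarrow> l"
    using admissible_Cauchy UNIV_complete unfolding complete_def by blast
  then show ?thesis unfolding limit_point_def by (simp add: limI)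
qed

lemma dist_limit_point_le:
  assumes "admissible s"
  shows "dist (pts n (s n)) (limit_point s) \<le> 4 * (1/2) ^ n"
proof (rule LIMSEQ_le_const2[OF tendsto_dist[OF tendsto_const limit_point[OF assms]]])
  have "dist (pts n (s n)) (pts m (s m)) \<le> 4 * (1/2) ^ n" if "n \<le> m" for m
    using admissible_dist_le[OF assms that] zero_le_power[of "1/2::real" m] by linarith
  then show "\<exists>N. \<forall>m\<ge>N. dist (pts n (s n)) (pts m (s m)) \<le> 4 * (1/2) ^ n" by blast
qed

lemma dist_limit_point_agree:
  assumes "admissible s" "admissible s'" "\<forall>k\<le>n. s k = s' k"
  shows "dist (limit_point s) (limit_point s') \<le> 8 * (1/2) ^ n"
  using dist_limit_point_le[OF assms(1), of n] dist_limit_point_le[OF assms(2), of n] assms(3)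
    dist_triangle3[of "limit_point s" "limit_point s'" "pts n (s n)"]
  by simp

definition codes :: "real set" where
  "codes = code ` {s. admissible s}"

definition decode :: "real \<Rightarrow> 'x" where
  "decode t = limit_point (SOME s. admissible s \<and> code s = t)"

lemma decode_code:
  assumes "admissible s"
  shows "decode (code s) = limit_point s"
proof -
  define s' where "s' = (SOME s'. admissible s' \<and> code s' = code s)"
  have s': "admissible s'" "code s' = code s"
    using someI[of "\<lambda>s'. admissible s' \<and> code s' = code s" s] assms unfolding s'_def by auto
  have "s' = s" by (rule code_inj[OF admissible_digit_seq[OF s'(1)] admissible_digit_seq[OF assms] s'(2)])
  then show ?thesis unfolding decode_def s'_def[symmetric] by simp
qed

lemma continuous_on_decode: "continuous_on codes decode"
  unfolding continuous_on_iff
proof (intro ballI allI impI)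
  fix t e assume "t \<in> codes" and "(0::real) < e"
  then obtain s where s: "admissible s" "t = code s" unfolding codes_def by auto
  obtain n where n: "(1/2::real) ^ n < e / 8" using real_arch_pow_inv[of "e / 8" "1/2"] \<open>0 < e\<close> by auto
  have "dist (decode t') (decode t) < e" if "t' \<in> codes" "dist t' t < 2 * weight n / 3" for t'
  proof -
    obtain s' where s': "admissible s'" "t' = code s'" using \<open>t' \<in> codes\<close> unfolding codes_def by auto
    have "\<forall>k\<le>n. s' k = s k"
      using agree_if_code_close[OF admissible_digit_seq[OF s'(1)] admissible_digit_seq[OF s(1)]] that(2) s s'
      by (simp add: dist_real_def)
    then have "dist (limit_point s') (limit_point s) \<le> 8 * (1/2) ^ n"
      by (rule dist_limit_point_agree[OF s'(1) s(1)])
    then show ?thesis using n s s' by (simp add: decode_code)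
  qed
  moreover have "0 < 2 * weight n / 3" using weight_pos[of n] by simp
  ultimately show "\<exists>d>0. \<forall>t'\<in>codes. dist t' t < d \<longrightarrow> dist (decode t') (decode t) < e" by blast
qed

lemma decode_surj: "decode ` codes = UNIV"
proof -
  have "x \<in> decode ` codes" for x
  proof -
    define s where "s n = (SOME i. i < cnt n \<and> dist x (pts n i) < (1/2) ^ n)" for n
    have s: "s n < cnt n \<and> dist x (pts n (s n)) < (1/2) ^ n" for n
      unfolding s_def by (rule someI_ex) (rule net)
    have "admissible s"
      unfolding admissible_def digit_seq_def
    proof (intro conjI allI)
      fix n
      show "s n < cnt n" using s by blast
      have "dist (pts n (s n)) (pts (Suc n) (s (Suc n))) \<le> dist x (pts n (s n)) + dist x (pts (Suc n) (s (Suc n)))"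
        by (rule dist_triangle3)
      also have "\<dots> < (1/2) ^ n + (1/2) ^ Suc n"
        using s by (intro add_strict_mono) blast+
      also have "\<dots> \<le> 2 * (1/2) ^ n" by simp
      finally show "dist (pts n (s n)) (pts (Suc n) (s (Suc n))) < 2 * (1/2) ^ n" .
    qed
    have "(\<lambda>n. dist (pts n (s n)) x) \<longlonglongrightarrow> 0"
    proof (rule tendsto_sandwich[of "\<lambda>_. 0" _ _ "\<lambda>n. (1/2::real) ^ n"])
      have "dist (pts n (s n)) x \<le> (1/2) ^ n" for n
        using s[of n] dist_commute[of x "pts n (s n)"] by linarith
      then show "\<forall>\<^sub>F n in sequentially. dist (pts n (s n)) x \<le> (1/2) ^ n" by simp
      show "(\<lambda>n. (1/2::real) ^ n) \<longlonglongrightarrow> 0" by (rule LIMSEQ_power_zero) simp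
    qed simp_all
    then have "(\<lambda>n. pts n (s n)) \<longlonglongrightarrow> x" by (rule tendsto_dist_iff[THEN iffD2])
    then have "limit_point s = x" using limit_point[OF \<open>admissible s\<close>] LIMSEQ_unique by blast
    then have "x = decode (code s)" using decode_code[OF \<open>admissible s\<close>] by simp
    then show ?thesis using \<open>admissible s\<close> unfolding codes_def by blast
  qed
  then show ?thesis by blast
qed

lemma code_bounds: "digit_seq s \<Longrightarrow> code s \<in> {0..2}"
proof -
  assume s: "digit_seq s"
  have "0 \<le> code s"
    unfolding code_def using summable_digits[OF s] weight_pos
    by (intro suminf_nonneg mult_nonneg_nonneg) (simp_all add: less_imp_le)
  moreover have "code s \<le> (\<Sum>n. (1/4::real) ^ n)"
    unfolding code_def
  proof (rule suminf_le)
    fix n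
    have "real (s n) \<le> cnt n" using s by (simp add: digit_seq_def less_imp_le)
    then have "real (s n) * weight n \<le> cnt n * weight n"
      using weight_pos[of n] by (intro mult_right_mono) simp_all
    then show "real (s n) * weight n \<le> (1/4) ^ n" using cnt_weight_le[of n] by linarith
  qed (use summable_digits[OF s] in \<open>simp_all add: summable_geometric\<close>)
  moreover have "(\<Sum>n. (1/4::real) ^ n) = 4/3" by (simp add: suminf_geometric)
  ultimately show ?thesis by simp
qed

lemma Cauchy_code_digits_converge:
  assumes \<sigma>: "\<And>k. admissible (\<sigma> k)" and "Cauchy (\<lambda>k. code (\<sigma> k))"
  obtains \<tau> where "admissible \<tau>" "\<And>n. \<forall>\<^sub>F k in sequentially. \<forall>i\<in>{..n}. \<sigma> k i = \<tau> i"
proof -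
  have "\<exists>N. \<forall>k\<ge>N. \<forall>k'\<ge>N. dist (code (\<sigma> k)) (code (\<sigma> k')) < 2 * weight n / 3" for n
  proof -
    have "0 < 2 * weight n / 3" using weight_pos[of n] by simp
    then show ?thesis using \<open>Cauchy (\<lambda>k. code (\<sigma> k))\<close> unfolding Cauchy_def by blast
  qed
  then obtain N where N: "\<And>n k k'. N n \<le> k \<Longrightarrow> N n \<le> k' \<Longrightarrow> dist (code (\<sigma> k)) (code (\<sigma> k')) < 2 * weight n / 3"
    by metis
  define \<tau> where "\<tau> n = \<sigma> (N n) n" for n
  have "\<sigma> k n = \<tau> n" if "N n \<le> k" for k n
    using agree_if_code_close[OF admissible_digit_seq[OF \<sigma>] admissible_digit_seq[OF \<sigma>]]
      N[OF that order_refl] unfolding \<tau>_def dist_real_def by blast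
  then have agree: "\<forall>\<^sub>F k in sequentially. \<forall>i\<in>{..n}. \<sigma> k i = \<tau> i" for n
    by (intro eventually_ball_finite) (auto simp: eventually_sequentially)
  have "admissible \<tau>"
    unfolding admissible_def digit_seq_def
  proof (intro conjI allI)
    fix n
    obtain k where k: "\<forall>i\<in>{..Suc n}. \<sigma> k i = \<tau> i"
      using eventually_happens[OF agree[of "Suc n"]] by auto
    then have "\<sigma> k n = \<tau> n" "\<sigma> k (Suc n) = \<tau> (Suc n)" by auto
    moreover have "\<sigma> k n < cnt n" "dist (pts n (\<sigma> k n)) (pts (Suc n) (\<sigma> k (Suc n))) < 2 * (1/2) ^ n"
      using \<sigma>[of k] by (auto simp: admissible_def digit_seq_def)
    ultimately show "\<tau> n < cnt n" "dist (pts n (\<tau> n)) (pts (Suc n) (\<tau> (Suc n))) < 2 * (1/2) ^ n"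
      by simp_all
  qed
  then show ?thesis by (rule that[OF _ agree])
qed

lemma closed_codes: "closed codes"
  unfolding closed_sequential_limits
proof (intro allI impI, elim conjE)
  fix x :: "nat \<Rightarrow> real" and l
  assume x_codes: "\<forall>k. x k \<in> codes" and "x \<longlonglongrightarrow> l"
  define \<sigma> where "\<sigma> k = (SOME s. admissible s \<and> x k = code s)" for k
  have \<sigma>: "admissible (\<sigma> k)" "x k = code (\<sigma> k)" for k
    using someI_ex[of "\<lambda>s. admissible s \<and> x k = code s"] x_codes unfolding \<sigma>_def codes_def by auto
  have "x = (\<lambda>k. code (\<sigma> k))" using \<sigma>(2) by (simp add: fun_eq_iff)
  then have "Cauchy (\<lambda>k. code (\<sigma> k))" using LIMSEQ_imp_Cauchy[OF \<open>x \<longlonglongrightarrow> l\<close>] by simp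
  then obtain \<tau> where "admissible \<tau>" and agree: "\<And>n. \<forall>\<^sub>F k in sequentially. \<forall>i\<in>{..n}. \<sigma> k i = \<tau> i"
    using Cauchy_code_digits_converge[of \<sigma>] \<sigma>(1) by blast
  have "x \<longlonglongrightarrow> code \<tau>"
  proof (rule tendstoI)
    fix r :: real assume "0 < r"
    then obtain n where "weight n < r"
      using order_tendstoD(2)[OF weight_tendsto_0] eventually_happens by (metis sequentially_bot)
    show "\<forall>\<^sub>F k in sequentially. dist (x k) (code \<tau>) < r"
      using agree[of n]
    proof eventually_elim
      case (elim k)
      then have "\<bar>code (\<sigma> k) - code \<tau>\<bar> \<le> weight n / 3"
        using code_close[OF admissible_digit_seq[OF \<sigma>(1)] admissible_digit_seq[OF \<open>admissible \<tau>\<close>]] by simp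
      then show ?case using \<sigma>(2)[of k] \<open>weight n < r\<close> weight_pos[of n] by (simp add: dist_real_def)
    qed
  qed
  then have "l = code \<tau>" using \<open>x \<longlonglongrightarrow> l\<close> LIMSEQ_unique by blast
  then show "l \<in> codes" unfolding codes_def using \<open>admissible \<tau>\<close> by blast
qed

lemma compact_codes: "compact codes"
proof -
  have "codes \<subseteq> {0..2}" using code_bounds admissible_digit_seq by (auto simp: codes_def)
  then show ?thesis using closed_codes bounded_subset[OF bounded_closed_interval]
    by (simp add: compact_eq_bounded_closed)
qed

end

lemma compact_space_continuous_image_of_compact_real:
  assumes "compact (UNIV :: 'x::metric_space set)"
  obtains K :: "real set" and \<psi> :: "real \<Rightarrow> 'x::metric_space" where "compact K" "continuous_on K \<psi>" "\<psi> ` K = UNIV"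
proof -
  have "\<exists>N (p :: nat \<Rightarrow> 'x). 0 < N \<and> (\<forall>x. \<exists>i<N. dist x (p i) < (1/2::real) ^ n)" for n
  proof -
    have "0 < (1/2::real) ^ n" by simp
    then obtain N and p :: "nat \<Rightarrow> 'x" where "0 < N" "\<And>x. \<exists>i<N. dist x (p i) < (1/2::real) ^ n"
      using compact_exists_finite_net[OF assms] by blast
    then show ?thesis by blast
  qed
  then obtain cnt :: "nat \<Rightarrow> nat" and pts :: "nat \<Rightarrow> nat \<Rightarrow> 'x"
    where "\<And>n. 0 < cnt n" "\<And>n x. \<exists>i<cnt n. dist x (pts n i) < (1/2) ^ n"
    by metis
  then interpret net_coding cnt pts
    using compact_imp_complete[OF assms] by unfold_locales auto
  show ?thesis using compact_codes continuous_on_decode decode_surj by (rule that)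
qed

section \<open>Weakly convergent subsequences of probability mass functions\<close>

lemma pmf_of_finite_weights:
  assumes "finite F" "\<And>x. x \<in> F \<Longrightarrow> 0 \<le> w x" "sum w F = 1"
  obtains p :: "'a pmf" where "\<And>h :: 'a \<Rightarrow> real. (\<integral>x. h x \<partial>measure_pmf p) = (\<Sum>x\<in>F. w x * h x)"
proof -
  define w' where "w' x = (if x \<in> F then w x else 0)" for x
  have w'_nonneg: "0 \<le> w' x" for x using assms(2) by (simp add: w'_def)
  have "(\<integral>\<^sup>+x. ennreal (w' x) \<partial>count_space UNIV) = (\<integral>\<^sup>+x. ennreal (w x) \<partial>count_space F)"
    by (subst nn_integral_count_space_indicator) (auto simp: w'_def intro!: nn_integral_cong split: split_indicator)
  also have "\<dots> = 1"
    using assms by (simp add: nn_integral_count_space_finite sum_ennreal)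
  finally have w'_sum: "(\<integral>\<^sup>+x. ennreal (w' x) \<partial>count_space UNIV) = 1" .
  define p where "p = embed_pmf w'"
  have pmf_p: "pmf p x = w' x" for x unfolding p_def by (rule pmf_embed_pmf[OF w'_nonneg w'_sum])
  have "(\<integral>x. h x \<partial>measure_pmf p) = (\<Sum>x\<in>F. w x * h x)" for h :: "'a \<Rightarrow> real"
  proof -
    have "set_pmf p \<subseteq> F" by (auto simp: set_pmf_iff pmf_p w'_def split: if_splits)
    then have "(\<integral>x. h x \<partial>measure_pmf p) = (\<Sum>x\<in>F. h x * pmf p x)"
      by (intro integral_measure_pmf_real[OF assms(1)]) blast
    then show ?thesis by (simp add: pmf_p w'_def mult.commute)
  qed
  then show ?thesis by (rule that)
qed

lemma continuous_on_compact_space_bounded: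
  fixes f :: "'a::topological_space \<Rightarrow> real"
  assumes "compact (UNIV :: 'a set)" "continuous_on UNIV f"
  obtains B where "\<And>x. \<bar>f x\<bar> \<le> B"
  using compact_imp_bounded[OF compact_continuous_image[OF assms(2,1)]] unfolding bounded_iff by auto

lemma weak_conv_limit_AE_in_closed:
  fixes \<mu> :: "nat \<Rightarrow> real measure" and K :: "real set"
  assumes \<mu>: "\<And>n. real_distribution (\<mu> n)" and M: "real_distribution M" and "weak_conv_m \<mu> M"
    and "closed K" "K \<noteq> {}" and in_K: "\<And>n. AE t in \<mu> n. t \<in> K"
  shows "AE t in M. t \<in> K"
proof -
  interpret M: real_distribution M by (rule M)
  define h where "h t = min 1 (infdist t K)" for t
  have h_cont: "isCont h t" for t unfolding h_def by (intro continuous_intros)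
  have h_bound: "norm (h t) \<le> 1" for t unfolding h_def using infdist_nonneg[of t K] by simp
  have h_borel: "h \<in> borel_measurable borel"
    by (rule borel_measurable_continuous_onI) (simp add: continuous_at_imp_continuous_on h_cont)
  have "(\<lambda>n. \<integral>t. h t \<partial>\<mu> n) \<longlonglongrightarrow> (\<integral>t. h t \<partial>M)"
    by (rule weak_conv_imp_integral_bdd_continuous_conv[OF \<mu> M \<open>weak_conv_m \<mu> M\<close> h_cont h_bound])
  moreover have "(\<integral>t. h t \<partial>\<mu> n) = 0" for n
    using in_K[of n] by (intro integral_eq_zero_AE) (auto simp: h_def elim: AE_mp)
  ultimately have "(\<integral>t. h t \<partial>M) = 0" by (simp add: LIMSEQ_const_iff)
  moreover have "integrable M h"
    using h_borel h_bound by (intro M.integrable_const_bound[where B=1]) auto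
  moreover have "AE t in M. 0 \<le> h t" by (simp add: h_def infdist_nonneg)
  ultimately have "AE t in M. h t = 0" by (simp add: integral_nonneg_eq_0_iff_AE)
  then show ?thesis
  proof (rule AE_mp, intro AE_I2 impI)
    fix t assume "h t = 0"
    then have "infdist t K = 0" unfolding h_def by (simp add: min_def split: if_splits)
    then show "t \<in> K"
      using in_closure_iff_infdist_zero[OF \<open>K \<noteq> {}\<close>] closure_closed[OF \<open>closed K\<close>] by simp
  qed
qed

lemma real_distributions_in_compact_weak_convergent_subseq:
  fixes \<mu> :: "nat \<Rightarrow> real measure" and K :: "real set"
  assumes "compact K" "K \<noteq> {}" and \<mu>: "\<And>n. real_distribution (\<mu> n)" and in_K: "\<And>n. AE t in \<mu> n. t \<in> K"
  obtains \<sigma> :: "nat \<Rightarrow> nat" and M :: "real measure"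
  where "strict_mono \<sigma>" "real_distribution M" "AE t in M. t \<in> K"
    "\<And>G :: real \<Rightarrow> real. \<And>B. (\<And>t. isCont G t) \<Longrightarrow> (\<And>t. norm (G t) \<le> B) \<Longrightarrow>
       (\<lambda>n. \<integral>t. G t \<partial>\<mu> (\<sigma> n)) \<longlonglongrightarrow> (\<integral>t. G t \<partial>M)"
proof -
  obtain a where a: "K \<subseteq> {-a..a}"
    using compact_imp_bounded[OF \<open>compact K\<close>] unfolding bounded_iff by (force simp: abs_le_iff)
  have "tight \<mu>"
    unfolding tight_def
  proof (intro conjI allI impI \<mu>)
    fix e :: real assume "0 < e"
    have "measure (\<mu> n) {-\<bar>a\<bar>-1<..\<bar>a\<bar>} = 1" for n
    proof -
      interpret real_distribution "\<mu> n" by (rule \<mu>)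
      have "AE t in \<mu> n. t \<in> {-\<bar>a\<bar>-1<..\<bar>a\<bar>}" using in_K[of n] by eventually_elim (use a in auto)
      then show ?thesis by (subst AE_in_set_eq_1[symmetric]) auto
    qed
    then show "\<exists>a' b'. a' < b' \<and> (\<forall>n. 1 - e < measure (\<mu> n) {a'<..b'})"
      using \<open>0 < e\<close> by (intro exI[of _ "-\<bar>a\<bar>-1"] exI[of _ "\<bar>a\<bar>"]) auto
  qed
  then obtain \<sigma> M where "strict_mono \<sigma>" and M: "real_distribution M" and "weak_conv_m (\<mu> \<circ> \<sigma>) M"
    using tight_imp_convergent_subsubsequence[of \<mu> id] by (auto simp: strict_mono_def)
  moreover have "AE t in M. t \<in> K"
  proof (rule weak_conv_limit_AE_in_closed[OF _ M \<open>weak_conv_m (\<mu> \<circ> \<sigma>) M\<close>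
        compact_imp_closed[OF \<open>compact K\<close>] \<open>K \<noteq> {}\<close>])
    show "real_distribution ((\<mu> \<circ> \<sigma>) n)" "AE t in (\<mu> \<circ> \<sigma>) n. t \<in> K" for n
      unfolding comp_apply by (rule \<mu>, rule in_K)
  qed
  moreover have "(\<lambda>n. \<integral>t. G t \<partial>\<mu> (\<sigma> n)) \<longlonglongrightarrow> (\<integral>t. G t \<partial>M)"
    if "\<And>t. isCont G t" "\<And>t. norm (G t) \<le> B" for G :: "real \<Rightarrow> real" and B
    using weak_conv_imp_integral_bdd_continuous_conv[of "\<mu> \<circ> \<sigma>" M G B] \<mu> M
      \<open>weak_conv_m (\<mu> \<circ> \<sigma>) M\<close> that by (simp add: o_def)
  ultimately show ?thesis using that by blast
qed

(* Helly's selection theorem is only available on the real line: lift the pmfs to the compact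
   coding set K, take a weak limit there and push it forward along the decoding map. *)
lemma pmf_seq_weak_convergent_subseq:
  fixes p :: "nat \<Rightarrow> 'x::metric_space pmf"
  assumes "compact (UNIV :: 'x set)"
  obtains \<sigma> :: "nat \<Rightarrow> nat" and \<nu> :: "'x measure"
  where "strict_mono \<sigma>" "prob_space \<nu>" "sets \<nu> = sets borel"
    "\<And>g :: 'x \<Rightarrow> real. continuous_on UNIV g \<Longrightarrow>
       (\<lambda>n. \<integral>x. g x \<partial>measure_pmf (p (\<sigma> n))) \<longlonglongrightarrow> (\<integral>x. g x \<partial>\<nu>)"
proof -
  obtain K :: "real set" and \<psi> :: "real \<Rightarrow> 'x" where K: "compact K" "continuous_on K \<psi>" "\<psi> ` K = UNIV"
    using compact_space_continuous_image_of_compact_real[OF assms] by blast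
  have "closed K" using K(1) by (rule compact_imp_closed)
  define lift where "lift x = (SOME t. t \<in> K \<and> \<psi> t = x)" for x
  have lift: "lift x \<in> K" "\<psi> (lift x) = x" for x
    using someI_ex[of "\<lambda>t. t \<in> K \<and> \<psi> t = x"] K(3) unfolding lift_def by (metis UNIV_I imageE)+
  define \<eta> where "\<eta> n = distr (measure_pmf (p n)) borel lift" for n
  have \<eta>: "real_distribution (\<eta> n)" for n
    unfolding \<eta>_def real_distribution_def real_distribution_axioms_def
    by (auto intro: prob_space.prob_space_distr measure_pmf.prob_space_axioms)
  have "K \<noteq> {}" using lift(1) by blast
  have \<eta>_in_K: "AE t in \<eta> n. t \<in> K" for n
    unfolding \<eta>_def using lift(1) borel_closed[OF \<open>closed K\<close>] by (subst AE_distr_iff) auto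
  obtain \<sigma> M where "strict_mono \<sigma>" and M: "real_distribution M" and "AE t in M. t \<in> K"
    and conv: "\<And>G :: real \<Rightarrow> real. \<And>B. (\<And>t. isCont G t) \<Longrightarrow> (\<And>t. norm (G t) \<le> B) \<Longrightarrow>
       (\<lambda>n. \<integral>t. G t \<partial>\<eta> (\<sigma> n)) \<longlonglongrightarrow> (\<integral>t. G t \<partial>M)"
    using real_distributions_in_compact_weak_convergent_subseq[where \<mu>=\<eta>, OF K(1) \<open>K \<noteq> {}\<close> \<eta> \<eta>_in_K]
    by blast
  interpret M: real_distribution M by (rule M)
  define \<psi>' where "\<psi>' t = (if t \<in> K then \<psi> t else \<psi> (lift undefined))" for t
  have \<psi>'_borel: "\<psi>' \<in> borel_measurable borel"
    unfolding \<psi>'_def[abs_def]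
    by (rule borel_measurable_continuous_on_if[OF borel_closed[OF \<open>closed K\<close>] K(2) continuous_on_const])
  then have \<psi>'_M: "\<psi>' \<in> borel_measurable M" by (simp add: measurable_cong_sets[OF M.events_eq_borel refl])
  define \<nu> where "\<nu> = distr M borel \<psi>'"
  have "(\<lambda>n. \<integral>x. g x \<partial>measure_pmf (p (\<sigma> n))) \<longlonglongrightarrow> (\<integral>x. g x \<partial>\<nu>)"
    if g: "continuous_on UNIV g" for g :: "'x \<Rightarrow> real"
  proof -
    obtain B where B: "\<And>x. \<bar>g x\<bar> \<le> B" using continuous_on_compact_space_bounded[OF assms g] by blast
    have "continuous_on K (g \<circ> \<psi>)" using g K(2) by (intro continuous_on_compose) (auto intro: continuous_on_subset)
    then obtain G where G: "continuous_on UNIV G" "\<And>t. t \<in> K \<Longrightarrow> G t = g (\<psi> t)" "\<And>t. norm (G t) \<le> B"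
      using Tietze[of K "g \<circ> \<psi>" UNIV B] B order_trans[OF abs_ge_zero B]
      by (auto simp: \<open>closed K\<close>)
    have G_borel: "G \<in> borel_measurable borel" by (rule borel_measurable_continuous_onI[OF G(1)])
    have "(\<lambda>n. \<integral>t. G t \<partial>\<eta> (\<sigma> n)) \<longlonglongrightarrow> (\<integral>t. G t \<partial>M)"
      by (rule conv[OF _ G(3)]) (use G(1) continuous_on_eq_continuous_at in blast)
    moreover have "(\<integral>t. G t \<partial>\<eta> (\<sigma> n)) = (\<integral>x. g x \<partial>measure_pmf (p (\<sigma> n)))" for n
      using G_borel G(2) lift by (simp add: \<eta>_def integral_distr)
    moreover have "(\<integral>t. G t \<partial>M) = (\<integral>x. g x \<partial>\<nu>)"
    proof -
      have "(\<integral>x. g x \<partial>\<nu>) = (\<integral>t. g (\<psi>' t) \<partial>M)"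
        unfolding \<nu>_def using g by (intro integral_distr \<psi>'_M borel_measurable_continuous_onI)
      also have "\<dots> = (\<integral>t. G t \<partial>M)"
      proof (rule integral_cong_AE)
        show "(\<lambda>t. g (\<psi>' t)) \<in> borel_measurable M"
          by (rule measurable_compose[OF \<psi>'_M borel_measurable_continuous_onI[OF g]])
        show "G \<in> borel_measurable M" by (simp add: measurable_cong_sets[OF M.events_eq_borel refl] G_borel)
        show "AE t in M. g (\<psi>' t) = G t"
          using \<open>AE t in M. t \<in> K\<close> by eventually_elim (simp add: \<psi>'_def G(2))
      qed
      finally show ?thesis by simp
    qed
    ultimately show ?thesis by simp
  qed
  moreover have "prob_space \<nu>" unfolding \<nu>_def by (rule M.prob_space_distr[OF \<psi>'_M])
  moreover have "sets \<nu> = sets borel" by (simp add: \<nu>_def)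
  ultimately show ?thesis using \<open>strict_mono \<sigma>\<close> that by blast
qed

section \<open>Partitions of unity\<close>

lemma exists_partition_of_unity:
  assumes "compact (UNIV :: 'x::metric_space set)" "0 < r"
  obtains F :: "'x::metric_space set" and \<phi> :: "'x \<Rightarrow> 'x \<Rightarrow> real"
  where "finite F" "F \<noteq> {}" "\<And>j. continuous_on UNIV (\<phi> j)" "\<And>j x. 0 \<le> \<phi> j x"
    "\<And>x. (\<Sum>j\<in>F. \<phi> j x) = 1" "\<And>j x. \<phi> j x \<noteq> 0 \<Longrightarrow> dist x j < r"
proof -
  obtain N and p :: "nat \<Rightarrow> 'x" where "0 < N" and near: "\<And>x. \<exists>i<N. dist x (p i) < r"
    using compact_exists_finite_net[OF assms] by blast
  define F where "F = p ` {..<N}"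
  have "finite F" "F \<noteq> {}" using \<open>0 < N\<close> by (auto simp: F_def)
  define bump where "bump j x = max 0 (r - dist x j)" for j x :: 'x
  define \<phi> where "\<phi> j x = bump j x / (\<Sum>l\<in>F. bump l x)" for j x
  have bump_nonneg: "0 \<le> bump j x" for j x by (simp add: bump_def)
  have sum_bump_pos: "0 < (\<Sum>l\<in>F. bump l x)" for x
  proof -
    obtain i where "i < N" "dist x (p i) < r" using near by blast
    then have "p i \<in> F" "0 < bump (p i) x" by (auto simp: F_def bump_def)
    then show ?thesis using \<open>finite F\<close> bump_nonneg by (intro sum_pos2) auto
  qed
  have "continuous_on UNIV (\<phi> j)" for j
    unfolding \<phi>_def[abs_def] bump_def using sum_bump_pos[unfolded bump_def]
    by (intro continuous_intros) (auto simp: less_imp_neq[symmetric])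
  moreover have "0 \<le> \<phi> j x" for j x
    unfolding \<phi>_def using bump_nonneg sum_bump_pos[of x] by simp
  moreover have "(\<Sum>j\<in>F. \<phi> j x) = 1" for x
    unfolding \<phi>_def using sum_bump_pos[of x] by (simp add: sum_divide_distrib[symmetric])
  moreover have "dist x j < r" if "\<phi> j x \<noteq> 0" for j x
    using that by (auto simp: \<phi>_def bump_def)
  ultimately show ?thesis using \<open>finite F\<close> \<open>F \<noteq> {}\<close> that by blast
qed

lemma partition_of_unity_interpolation_error:
  fixes f :: "'x::metric_space \<Rightarrow> real" and \<phi> :: "'x \<Rightarrow> 'x \<Rightarrow> real"
  assumes "\<And>j. 0 \<le> \<phi> j y" "(\<Sum>j\<in>F. \<phi> j y) = 1" "\<And>j. \<phi> j y \<noteq> 0 \<Longrightarrow> dist y j < r"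
    and "\<And>x y. dist x y < r \<Longrightarrow> \<bar>f x - f y\<bar> \<le> \<eta>"
  shows "\<bar>f y - (\<Sum>j\<in>F. f j * \<phi> j y)\<bar> \<le> \<eta>"
proof -
  have "(\<Sum>j\<in>F. \<phi> j y * f y) = f y" using assms(2) by (simp add: sum_distrib_right[symmetric])
  moreover have "(\<Sum>j\<in>F. f j * \<phi> j y) = (\<Sum>j\<in>F. \<phi> j y * f j)" by (simp add: mult.commute)
  ultimately have "f y - (\<Sum>j\<in>F. f j * \<phi> j y) = (\<Sum>j\<in>F. \<phi> j y * f y) - (\<Sum>j\<in>F. \<phi> j y * f j)"
    by simp
  also have "\<dots> = (\<Sum>j\<in>F. \<phi> j y * (f y - f j))"
    by (simp add: sum_subtractf right_diff_distrib)
  also have "\<bar>\<dots>\<bar> \<le> (\<Sum>j\<in>F. \<phi> j y * \<eta>)"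
  proof (rule order_trans[OF sum_abs sum_mono])
    fix j
    show "\<bar>\<phi> j y * (f y - f j)\<bar> \<le> \<phi> j y * \<eta>"
    proof (cases "\<phi> j y = 0")
      case False
      then show ?thesis using assms(1,3,4) by (simp add: abs_mult mult_left_mono)
    qed simp
  qed
  also have "\<dots> = \<eta>" using assms(2) by (simp add: sum_distrib_right[symmetric])
  finally show ?thesis .
qed

section \<open>The transfer operator and its eigenmeasures\<close>

lemma integral_scale_measure:
  fixes f :: "'a \<Rightarrow> real"
  assumes "0 \<le> r" "f \<in> borel_measurable M"
  shows "(\<integral>x. f x \<partial>scale_measure (ennreal r) M) = r * (\<integral>x. f x \<partial>M)"
proof -
  have "scale_measure (ennreal r) M = density M (\<lambda>_. ennreal r)"
    by (rule measure_eqI) (simp_all add: emeasure_density nn_integral_cmult_indicator)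
  then show ?thesis using assms by (simp add: integral_density)
qed

locale transfer_system =
  fixes \<tau> :: "'t::metric_space \<Rightarrow> 'x::metric_space \<Rightarrow> 'x"
    and q :: "'x \<Rightarrow> 't measure" and c C :: real
  assumes X_compact: "compact (UNIV :: 'x set)"
    and Theta_compact: "compact (UNIV :: 't set)"
    and tau_cont: "continuous_on UNIV (\<lambda>(\<theta>, x). \<tau> \<theta> x)"
    and sets_q: "\<And>x. sets (q x) = sets borel"
    and finite_q: "\<And>x. finite_measure (q x)"
    and c_pos: "0 < c"
    and total_q_ge: "\<And>x. c \<le> measure (q x) UNIV"
    and total_q_le: "\<And>x. measure (q x) UNIV \<le> C"
    and q_weak_cont: "\<And>f :: 't \<Rightarrow> real. continuous_on UNIV f \<Longrightarrow>
                        continuous_on UNIV (\<lambda>x. \<integral>\<theta>. f \<theta> \<partial>q x)"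
begin

lemma space_q: "space (q x) = UNIV"
  using sets_eq_imp_space_eq[OF sets_q[of x]] by simp

lemma C_pos: "0 < C"
  using c_pos total_q_ge[of undefined] total_q_le[of undefined] by linarith

lemma borel_measurable_q: "f \<in> borel_measurable borel \<Longrightarrow> f \<in> borel_measurable (q x)"
  by (simp add: measurable_cong_sets[OF sets_q refl])

lemma integrable_q_bounded:
  fixes f :: "'t \<Rightarrow> real"
  assumes "f \<in> borel_measurable borel" "\<And>\<theta>. \<bar>f \<theta>\<bar> \<le> B"
  shows "integrable (q x) f"
proof -
  interpret finite_measure "q x" by (rule finite_q)
  show ?thesis using assms by (intro integrable_const_bound[where B=B]) (auto simp: borel_measurable_q)
qed

lemma abs_integral_q_le:
  fixes f :: "'t \<Rightarrow> real"
  assumes "f \<in> borel_measurable borel" "\<And>\<theta>. \<bar>f \<theta>\<bar> \<le> B"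
  shows "\<bar>\<integral>\<theta>. f \<theta> \<partial>q x\<bar> \<le> B * C"
proof -
  have "0 \<le> B" using assms(2) by (rule order_trans[OF abs_ge_zero])
  have "\<bar>\<integral>\<theta>. f \<theta> \<partial>q x\<bar> \<le> (\<integral>\<theta>. \<bar>f \<theta>\<bar> \<partial>q x)"
    using integral_norm_bound[of "q x" f] by simp
  also have "\<dots> \<le> (\<integral>\<theta>. B \<partial>q x)"
  proof (rule integral_mono)
    show "integrable (q x) (\<lambda>\<theta>. \<bar>f \<theta>\<bar>)" by (rule integrable_abs[OF integrable_q_bounded[OF assms]])
    show "integrable (q x) (\<lambda>\<theta>. B)" by (rule integrable_q_bounded[of _ "\<bar>B\<bar>"]) simp_all
  qed (rule assms(2))
  also have "\<dots> = measure (q x) UNIV * B" by (simp add: space_q)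
  also have "\<dots> \<le> C * B" using total_q_le \<open>0 \<le> B\<close> by (intro mult_right_mono) auto
  finally show ?thesis by (simp add: mult.commute)
qed

lemma continuous_on_tau_comp:
  assumes "continuous_on UNIV f"
  shows "continuous_on UNIV (\<lambda>\<theta>. f (\<tau> \<theta> x))"
proof -
  have "continuous_on UNIV ((\<lambda>(\<theta>, x). \<tau> \<theta> x) \<circ> (\<lambda>\<theta>. (\<theta>, x)))"
    by (rule continuous_on_compose) (auto intro!: continuous_intros continuous_on_subset[OF tau_cont])
  then have "continuous_on UNIV (\<lambda>\<theta>. \<tau> \<theta> x)" by (simp add: o_def)
  then show ?thesis by (rule continuous_on_compose2[OF assms]) auto
qed

lemma integrable_tau_comp:
  fixes f :: "'x \<Rightarrow> real"
  assumes "continuous_on UNIV f"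
  shows "integrable (q x) (\<lambda>\<theta>. f (\<tau> \<theta> y))"
proof -
  obtain B where "\<And>\<theta>. \<bar>f (\<tau> \<theta> y)\<bar> \<le> B"
    using continuous_on_compact_space_bounded[OF Theta_compact continuous_on_tau_comp[OF assms]] by blast
  then show ?thesis
    by (rule integrable_q_bounded[OF borel_measurable_continuous_onI[OF continuous_on_tau_comp[OF assms]]])
qed

lemma tau_comp_uniformly_close:
  assumes "continuous_on UNIV f" "0 < e"
  obtains d where "0 < d" "\<And>x y \<theta>. dist y x < d \<Longrightarrow> dist (f (\<tau> \<theta> y)) (f (\<tau> \<theta> x)) < e"
proof -
  have "continuous_on UNIV (f \<circ> (\<lambda>(\<theta>, x). \<tau> \<theta> x))"
    using assms(1) by (intro continuous_on_compose tau_cont) (auto intro: continuous_on_subset)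
  moreover have "compact (UNIV :: ('t \<times> 'x) set)"
    using compact_Times[OF Theta_compact X_compact] by simp
  ultimately have "uniformly_continuous_on UNIV (f \<circ> (\<lambda>(\<theta>, x). \<tau> \<theta> x))"
    by (rule compact_uniformly_continuous)
  then obtain d where "0 < d"
    and d: "\<And>a b. dist a b < d \<Longrightarrow> dist ((f \<circ> (\<lambda>(\<theta>, x). \<tau> \<theta> x)) a) ((f \<circ> (\<lambda>(\<theta>, x). \<tau> \<theta> x)) b) < e"
    using assms(2) unfolding uniformly_continuous_on_def by blast
  have "dist (f (\<tau> \<theta> y)) (f (\<tau> \<theta> x)) < e" if "dist y x < d" for x y \<theta>
    using d[of "(\<theta>, y)" "(\<theta>, x)"] that by (simp add: dist_Pair_Pair)
  with \<open>0 < d\<close> show ?thesis by (rule that)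
qed

lemma continuous_on_Bq_fun:
  assumes f: "continuous_on UNIV f"
  shows "continuous_on UNIV (Bq_fun q \<tau> f)"
  unfolding continuous_on_iff
proof (intro ballI allI impI)
  fix x :: 'x and e :: real assume "0 < e"
  obtain d1 where "0 < d1" and d1: "\<And>x y \<theta>. dist y x < d1 \<Longrightarrow> dist (f (\<tau> \<theta> y)) (f (\<tau> \<theta> x)) < e / (2 * C)"
    using tau_comp_uniformly_close[OF f, of "e / (2 * C)"] \<open>0 < e\<close> C_pos by auto
  have "continuous_on UNIV (\<lambda>y. \<integral>\<theta>. f (\<tau> \<theta> x) \<partial>q y)"
    by (rule q_weak_cont[OF continuous_on_tau_comp[OF f]])
  then obtain d2 where "0 < d2"
    and d2: "\<And>y. dist y x < d2 \<Longrightarrow> dist (\<integral>\<theta>. f (\<tau> \<theta> x) \<partial>q y) (\<integral>\<theta>. f (\<tau> \<theta> x) \<partial>q x) < e / 2"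
    unfolding continuous_on_iff using \<open>0 < e\<close> by (metis UNIV_I half_gt_zero)
  have "dist (Bq_fun q \<tau> f y) (Bq_fun q \<tau> f x) < e" if "dist y x < min d1 d2" for y
  proof -
    have "Bq_fun q \<tau> f y - Bq_fun q \<tau> f x
        = (\<integral>\<theta>. f (\<tau> \<theta> y) - f (\<tau> \<theta> x) \<partial>q y) + ((\<integral>\<theta>. f (\<tau> \<theta> x) \<partial>q y) - (\<integral>\<theta>. f (\<tau> \<theta> x) \<partial>q x))"
      unfolding Bq_fun_def using integrable_tau_comp[OF f] by simp
    moreover have "\<bar>\<integral>\<theta>. f (\<tau> \<theta> y) - f (\<tau> \<theta> x) \<partial>q y\<bar> \<le> e / (2 * C) * C"
    proof (rule abs_integral_q_le)
      show "(\<lambda>\<theta>. f (\<tau> \<theta> y) - f (\<tau> \<theta> x)) \<in> borel_measurable borel"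
        using f by (intro borel_measurable_continuous_onI continuous_on_diff continuous_on_tau_comp)
      show "\<bar>f (\<tau> \<theta> y) - f (\<tau> \<theta> x)\<bar> \<le> e / (2 * C)" for \<theta>
        using d1[of y x \<theta>] that by (simp add: dist_real_def)
    qed
    moreover have "\<bar>(\<integral>\<theta>. f (\<tau> \<theta> x) \<partial>q y) - (\<integral>\<theta>. f (\<tau> \<theta> x) \<partial>q x)\<bar> < e / 2"
      using d2[of y] that by (simp add: dist_real_def)
    ultimately show ?thesis
      using C_pos abs_triangle_ineq[of "\<integral>\<theta>. f (\<tau> \<theta> y) - f (\<tau> \<theta> x) \<partial>q y"
          "(\<integral>\<theta>. f (\<tau> \<theta> x) \<partial>q y) - (\<integral>\<theta>. f (\<tau> \<theta> x) \<partial>q x)"]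
      by (simp add: dist_real_def; linarith)
  qed
  then show "\<exists>d>0. \<forall>y\<in>UNIV. dist y x < d \<longrightarrow> dist (Bq_fun q \<tau> f y) (Bq_fun q \<tau> f x) < e"
    using \<open>0 < d1\<close> \<open>0 < d2\<close> by (intro exI[of _ "min d1 d2"]) auto
qed

lemma Bq_fun_add:
  "continuous_on UNIV f \<Longrightarrow> continuous_on UNIV g \<Longrightarrow>
    Bq_fun q \<tau> (\<lambda>y. f y + g y) x = Bq_fun q \<tau> f x + Bq_fun q \<tau> g x"
  unfolding Bq_fun_def by (simp add: integrable_tau_comp)

lemma Bq_fun_diff:
  "continuous_on UNIV f \<Longrightarrow> continuous_on UNIV g \<Longrightarrow>
    Bq_fun q \<tau> (\<lambda>y. f y - g y) x = Bq_fun q \<tau> f x - Bq_fun q \<tau> g x"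
  unfolding Bq_fun_def by (simp add: integrable_tau_comp)

lemma Bq_fun_scale: "Bq_fun q \<tau> (\<lambda>y. a * f y) x = a * Bq_fun q \<tau> f x"
  unfolding Bq_fun_def by simp

lemma Bq_fun_sum:
  "(\<And>i. i \<in> I \<Longrightarrow> continuous_on UNIV (f i)) \<Longrightarrow>
    Bq_fun q \<tau> (\<lambda>y. \<Sum>i\<in>I. f i y) x = (\<Sum>i\<in>I. Bq_fun q \<tau> (f i) x)"
  unfolding Bq_fun_def by (rule Bochner_Integration.integral_sum) (rule integrable_tau_comp)

lemma Bq_fun_mono:
  "continuous_on UNIV f \<Longrightarrow> continuous_on UNIV g \<Longrightarrow> (\<And>y. f y \<le> g y) \<Longrightarrow>
    Bq_fun q \<tau> f x \<le> Bq_fun q \<tau> g x"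
  unfolding Bq_fun_def by (intro integral_mono integrable_tau_comp) auto

lemma Bq_fun_nonneg: "continuous_on UNIV f \<Longrightarrow> (\<And>y. 0 \<le> f y) \<Longrightarrow> 0 \<le> Bq_fun q \<tau> f x"
  using Bq_fun_mono[of "\<lambda>_. 0" f x] by (simp add: Bq_fun_def)

lemma Bq_fun_one: "Bq_fun q \<tau> (\<lambda>_. 1) x = measure (q x) UNIV"
  unfolding Bq_fun_def by (simp add: space_q)

lemma abs_Bq_fun_le:
  assumes "continuous_on UNIV f" "\<And>y. \<bar>f y\<bar> \<le> B"
  shows "\<bar>Bq_fun q \<tau> f x\<bar> \<le> B * C"
  unfolding Bq_fun_def using assms
  by (intro abs_integral_q_le borel_measurable_continuous_onI continuous_on_tau_comp) auto

lemma Bq_fun_bcontfun: "Bq_fun q \<tau> (apply_bcontfun g) \<in> bcontfun"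
proof (rule bcontfun_normI)
  show "continuous_on UNIV (Bq_fun q \<tau> (apply_bcontfun g))" by (rule continuous_on_Bq_fun) simp
  show "norm (Bq_fun q \<tau> (apply_bcontfun g) x) \<le> norm g * C" for x
    using abs_Bq_fun_le[of "apply_bcontfun g" "norm g" x] norm_bounded[of g] by simp
qed

lemma apply_Bcontfun_Bq_fun:
  "apply_bcontfun (Bcontfun (Bq_fun q \<tau> (apply_bcontfun g))) = Bq_fun q \<tau> (apply_bcontfun g)"
  by (rule Bcontfun_inverse[OF Bq_fun_bcontfun])

lemma bounded_linear_Bq: "bounded_linear (\<lambda>g. Bcontfun (Bq_fun q \<tau> (apply_bcontfun g)))"
proof (rule bounded_linear_intro[where K=C])
  show "Bcontfun (Bq_fun q \<tau> (apply_bcontfun (g + h))) =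
        Bcontfun (Bq_fun q \<tau> (apply_bcontfun g)) + Bcontfun (Bq_fun q \<tau> (apply_bcontfun h))" for g h
    by (rule bcontfun_eqI, simp only: apply_Bcontfun_Bq_fun) (simp add: Bq_fun_add apply_Bcontfun_Bq_fun)
  show "Bcontfun (Bq_fun q \<tau> (apply_bcontfun (r *\<^sub>R g))) = r *\<^sub>R Bcontfun (Bq_fun q \<tau> (apply_bcontfun g))" for r g
    by (rule bcontfun_eqI, simp only: apply_Bcontfun_Bq_fun) (simp add: Bq_fun_scale apply_Bcontfun_Bq_fun)
  show "norm (Bcontfun (Bq_fun q \<tau> (apply_bcontfun g))) \<le> norm g * C" for g
    using abs_Bq_fun_le[of "apply_bcontfun g" "norm g"] norm_bounded[of g]
    by (intro norm_bound) (simp add: apply_Bcontfun_Bq_fun)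
qed

lemma Bq_op_apply: "apply_bcontfun (blinfun_apply (Bq_op q \<tau>) g) = Bq_fun q \<tau> (apply_bcontfun g)"
  unfolding Bq_op_def bounded_linear_Blinfun_apply[OF bounded_linear_Bq]
  by (simp add: apply_Bcontfun_Bq_fun)

lemma blinfun_pow_Bq_op_apply:
  "apply_bcontfun (blinfun_apply (blinfun_pow (Bq_op q \<tau>) n) g) = (Bq_fun q \<tau> ^^ n) (apply_bcontfun g)"
  by (induction n) (simp_all add: blinfun_pow_def Bq_op_apply)

lemma continuous_on_funpow_Bq_fun:
  "continuous_on UNIV f \<Longrightarrow> continuous_on UNIV ((Bq_fun q \<tau> ^^ n) f)"
  by (induction n) (auto intro: continuous_on_Bq_fun)

lemma funpow_Bq_fun_one_le_norm: "(Bq_fun q \<tau> ^^ n) (\<lambda>_. 1) x \<le> norm (blinfun_pow (Bq_op q \<tau>) n)"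
proof -
  let ?T = "blinfun_pow (Bq_op q \<tau>) n" and ?one = "const_bcontfun (1::real) :: 'x \<Rightarrow>\<^sub>C real"
  have "norm ?one \<le> 1" by (rule norm_bound) simp
  have "(Bq_fun q \<tau> ^^ n) (\<lambda>_. 1) x = apply_bcontfun (blinfun_apply ?T ?one) x"
    by (simp add: blinfun_pow_Bq_op_apply)
  also have "\<dots> \<le> norm (blinfun_apply ?T ?one)" using norm_bounded[of "blinfun_apply ?T ?one" x] by simp
  also have "\<dots> \<le> norm ?T * norm ?one" by (rule norm_blinfun)
  also have "\<dots> \<le> norm ?T" using \<open>norm ?one \<le> 1\<close> by (simp add: mult_left_le)
  finally show ?thesis .
qed

lemma Bq_fun_interpolation_error:
  fixes \<phi> :: "'x \<Rightarrow> 'x \<Rightarrow> real" and f :: "'x \<Rightarrow> real"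
  assumes \<phi>: "\<And>j. continuous_on UNIV (\<phi> j)" "\<And>j x. 0 \<le> \<phi> j x" "\<And>x. (\<Sum>j\<in>F. \<phi> j x) = 1"
      "\<And>j x. \<phi> j x \<noteq> 0 \<Longrightarrow> dist x j < r"
    and f: "continuous_on UNIV f" and f_unif: "\<And>x y. dist x y < r \<Longrightarrow> \<bar>f x - f y\<bar> \<le> \<eta>"
  shows "\<bar>Bq_fun q \<tau> f i - (\<Sum>j\<in>F. f j * Bq_fun q \<tau> (\<phi> j) i)\<bar> \<le> \<eta> * C"
proof -
  define f' where "f' y = (\<Sum>j\<in>F. f j * \<phi> j y)" for y
  have f'_cont: "continuous_on UNIV f'"
    unfolding f'_def[abs_def] by (intro continuous_intros \<phi>(1))
  have "Bq_fun q \<tau> f' i = (\<Sum>j\<in>F. f j * Bq_fun q \<tau> (\<phi> j) i)"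
    unfolding f'_def using \<phi>(1) by (simp add: Bq_fun_sum Bq_fun_scale continuous_intros)
  then have "Bq_fun q \<tau> f i - (\<Sum>j\<in>F. f j * Bq_fun q \<tau> (\<phi> j) i) = Bq_fun q \<tau> (\<lambda>y. f y - f' y) i"
    using Bq_fun_diff[OF f f'_cont, of i] by simp
  also have "\<bar>\<dots>\<bar> \<le> \<eta> * C"
    using f f'_cont partition_of_unity_interpolation_error[OF \<phi>(2) \<phi>(3) \<phi>(4) f_unif]
    by (intro abs_Bq_fun_le) (auto simp: f'_def intro: continuous_on_diff)
  finally show ?thesis .
qed

lemma approx_eigen_estimate:
  fixes \<phi> :: "'x \<Rightarrow> 'x \<Rightarrow> real" and f :: "'x \<Rightarrow> real"
  assumes \<phi>: "\<And>j. continuous_on UNIV (\<phi> j)" "\<And>j x. 0 \<le> \<phi> j x" "\<And>x. (\<Sum>j\<in>F. \<phi> j x) = 1"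
      "\<And>j x. \<phi> j x \<noteq> 0 \<Longrightarrow> dist x j < r"
    and w: "\<And>i. i \<in> F \<Longrightarrow> 0 \<le> w i" "sum w F = 1"
    and A: "\<And>i j. A i j = Bq_fun q \<tau> (\<phi> j) i"
    and defect: "(\<Sum>j\<in>F. \<bar>vec_mat F A w j - \<rho> * w j\<bar>) \<le> e"
    and f: "continuous_on UNIV f" and f_unif: "\<And>x y. dist x y < r \<Longrightarrow> \<bar>f x - f y\<bar> \<le> \<eta>"
    and f_bound: "\<And>x. \<bar>f x\<bar> \<le> B"
  shows "\<bar>(\<Sum>i\<in>F. w i * Bq_fun q \<tau> f i) - \<rho> * (\<Sum>i\<in>F. w i * f i)\<bar> \<le> C * \<eta> + e * B"
proof -
  define E1 where "E1 = (\<Sum>i\<in>F. w i * (Bq_fun q \<tau> f i - (\<Sum>j\<in>F. f j * A i j)))"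
  define E2 where "E2 = (\<Sum>j\<in>F. (vec_mat F A w j - \<rho> * w j) * f j)"
  have "(\<Sum>i\<in>F. w i * (\<Sum>j\<in>F. f j * A i j)) = (\<Sum>j\<in>F. vec_mat F A w j * f j)"
    unfolding sum_vec_mat_mult mat_vec_def by (simp add: mult.commute)
  then have "(\<Sum>i\<in>F. w i * Bq_fun q \<tau> f i) - \<rho> * (\<Sum>i\<in>F. w i * f i) = E1 + E2"
    by (simp add: E1_def E2_def algebra_simps sum_subtractf sum.distrib sum_distrib_left)
  moreover have "\<bar>E1\<bar> \<le> C * \<eta>"
  proof -
    have "\<bar>E1\<bar> \<le> (\<Sum>i\<in>F. w i * (\<eta> * C))"
      unfolding E1_def A using w(1) Bq_fun_interpolation_error[OF \<phi> f f_unif]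
      by (intro order_trans[OF sum_abs sum_mono]) (simp add: abs_mult mult_left_mono)
    also have "\<dots> = C * \<eta>" using w(2) by (simp add: sum_distrib_right[symmetric])
    finally show ?thesis .
  qed
  moreover have "\<bar>E2\<bar> \<le> e * B"
  proof -
    have "\<bar>E2\<bar> \<le> (\<Sum>j\<in>F. \<bar>vec_mat F A w j - \<rho> * w j\<bar> * B)"
      unfolding E2_def using f_bound
      by (intro order_trans[OF sum_abs sum_mono]) (simp add: abs_mult mult_left_mono)
    also have "\<dots> \<le> e * B"
      using defect order_trans[OF abs_ge_zero f_bound] by (simp add: sum_distrib_right[symmetric] mult_right_mono)
    finally show ?thesis .
  qed
  ultimately show ?thesis by linarith
qed

definition approx_eigen_pmf :: "real \<Rightarrow> real \<Rightarrow> 'x pmf \<Rightarrow> real \<Rightarrow> bool" where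
  "approx_eigen_pmf r e p \<rho> \<longleftrightarrow> c \<le> \<rho> \<and> \<rho> \<le> C \<and>
     (\<forall>f \<eta> B. continuous_on UNIV f \<longrightarrow> (\<forall>x y. dist x y < r \<longrightarrow> \<bar>f x - f y\<bar> \<le> \<eta>) \<longrightarrow>
       (\<forall>x. \<bar>f x\<bar> \<le> B) \<longrightarrow>
       \<bar>(\<integral>x. Bq_fun q \<tau> f x \<partial>p) - \<rho> * (\<integral>x. f x \<partial>p)\<bar> \<le> C * \<eta> + e * B)"

lemma exists_approx_eigen_pmf:
  assumes "0 < r" "0 < e"
  shows "\<exists>p \<rho>. approx_eigen_pmf r e p \<rho>"
proof -
  obtain F :: "'x set" and \<phi> :: "'x \<Rightarrow> 'x \<Rightarrow> real" where F: "finite F" "F \<noteq> {}"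
    and \<phi>: "\<And>j. continuous_on UNIV (\<phi> j)" "\<And>j x. 0 \<le> \<phi> j x" "\<And>x. (\<Sum>j\<in>F. \<phi> j x) = 1"
      "\<And>j x. \<phi> j x \<noteq> 0 \<Longrightarrow> dist x j < r"
    using exists_partition_of_unity[OF X_compact \<open>0 < r\<close>] by blast
  define A where "A i j = Bq_fun q \<tau> (\<phi> j) i" for i j
  have row_sum: "(\<Sum>j\<in>F. A i j) = measure (q i) UNIV" for i
    unfolding A_def using Bq_fun_sum[of F \<phi> i] \<phi>(1,3) by (simp add: Bq_fun_one)
  interpret A: row_bounded_matrix F A c C
  proof
    show "0 \<le> A i j" for i j unfolding A_def by (rule Bq_fun_nonneg[OF \<phi>(1,2)])
    show "c \<le> (\<Sum>j\<in>F. A i j)" "(\<Sum>j\<in>F. A i j) \<le> C" for i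
      unfolding row_sum by (rule total_q_ge, rule total_q_le)
  qed (use F c_pos in auto)
  obtain w where w: "\<And>i. i \<in> F \<Longrightarrow> 0 \<le> w i" "sum w F = 1"
    and defect: "(\<Sum>j\<in>F. \<bar>vec_mat F A w j - A.growth * w j\<bar>) \<le> e"
    using A.exists_approx_left_eigenvector[OF \<open>0 < e\<close>] by blast
  obtain p :: "'x pmf" where p: "\<And>h :: 'x \<Rightarrow> real. (\<integral>x. h x \<partial>p) = (\<Sum>x\<in>F. w x * h x)"
    using pmf_of_finite_weights[OF F(1) w] by blast
  have "\<bar>(\<integral>x. Bq_fun q \<tau> f x \<partial>p) - A.growth * (\<integral>x. f x \<partial>p)\<bar> \<le> C * \<eta> + e * B"
    if f: "continuous_on UNIV f" and f_unif: "\<forall>x y. dist x y < r \<longrightarrow> \<bar>f x - f y\<bar> \<le> \<eta>"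
      and f_bound: "\<forall>x. \<bar>f x\<bar> \<le> B" for f \<eta> B
    unfolding p using f f_unif f_bound by (intro approx_eigen_estimate[OF \<phi> w A_def defect]) auto
  then have "approx_eigen_pmf r e p A.growth"
    using A.c_le_growth A.growth_le_C by (simp add: approx_eigen_pmf_def)
  then show ?thesis by blast
qed

lemma approx_eigen_defect_tendsto_0:
  assumes approx: "\<And>n. approx_eigen_pmf (r n) (r n) (p n) (\<rho> n)" and "r \<longlonglongrightarrow> 0"
    and f: "continuous_on UNIV f"
  shows "(\<lambda>n. (\<integral>x. Bq_fun q \<tau> f x \<partial>p n) - \<rho> n * (\<integral>x. f x \<partial>p n)) \<longlonglongrightarrow> 0"
proof (rule tendstoI)
  fix e :: real assume "0 < e"
  obtain B where B: "\<And>x. \<bar>f x\<bar> \<le> B" using continuous_on_compact_space_bounded[OF X_compact f] by blast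
  have "0 \<le> B" using B by (rule order_trans[OF abs_ge_zero])
  have "uniformly_continuous_on UNIV f" by (rule compact_uniformly_continuous[OF f X_compact])
  moreover have "0 < e / (3 * C)" using \<open>0 < e\<close> C_pos by simp
  ultimately obtain \<delta> where "0 < \<delta>"
    and \<delta>: "\<forall>x\<in>UNIV. \<forall>y\<in>UNIV. dist y x < \<delta> \<longrightarrow> dist (f y) (f x) < e / (3 * C)"
    unfolding uniformly_continuous_on_def by blast
  have "0 < min \<delta> (e / (3 * (B + 1)))" using \<open>0 < \<delta>\<close> \<open>0 < e\<close> \<open>0 \<le> B\<close> by simp
  from order_tendstoD(2)[OF \<open>r \<longlonglongrightarrow> 0\<close> this]
  show "\<forall>\<^sub>F n in sequentially. dist ((\<integral>x. Bq_fun q \<tau> f x \<partial>p n) - \<rho> n * (\<integral>x. f x \<partial>p n)) 0 < e"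
  proof eventually_elim
    case (elim n)
    have "r n * B \<le> e / (3 * (B + 1)) * B"
      using elim \<open>0 \<le> B\<close> by (intro mult_right_mono) auto
    also have "\<dots> < e / 3" using \<open>0 < e\<close> \<open>0 \<le> B\<close> by (simp add: field_simps)
    finally have "r n * B < e / 3" .
    moreover have "\<forall>x y. dist x y < r n \<longrightarrow> \<bar>f x - f y\<bar> \<le> e / (3 * C)"
      using \<delta> elim by (auto simp: dist_real_def dist_commute abs_minus_commute less_imp_le)
    then have "\<bar>(\<integral>x. Bq_fun q \<tau> f x \<partial>p n) - \<rho> n * (\<integral>x. f x \<partial>p n)\<bar> \<le> C * (e / (3 * C)) + r n * B"
      using approx[of n] f B unfolding approx_eigen_pmf_def by blast
    ultimately show ?case using C_pos \<open>0 < e\<close> by simp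
  qed
qed

lemma exists_eigen_probability:
  obtains \<nu> :: "'x measure" and \<rho> :: real
  where "prob_space \<nu>" "sets \<nu> = sets borel" "c \<le> \<rho>"
    "\<And>f. continuous_on UNIV f \<Longrightarrow> (\<integral>x. Bq_fun q \<tau> f x \<partial>\<nu>) = \<rho> * (\<integral>x. f x \<partial>\<nu>)"
proof -
  define r where "r k = 1 / real (Suc k)" for k
  have "\<forall>k. \<exists>p \<rho>'. approx_eigen_pmf (r k) (r k) p \<rho>'"
    by (simp add: r_def exists_approx_eigen_pmf)
  then obtain p \<rho>' where approx: "\<And>k. approx_eigen_pmf (r k) (r k) (p k) (\<rho>' k)" by metis
  then have "\<forall>k. \<rho>' k \<in> {c..C}" by (simp add: approx_eigen_pmf_def)
  then obtain \<rho> s where "\<rho> \<in> {c..C}" "strict_mono s" "(\<rho>' \<circ> s) \<longlonglongrightarrow> \<rho>"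
    using seq_compactE[OF compact_imp_seq_compact[OF compact_Icc]] by blast
  obtain s' \<nu> where "strict_mono s'" "prob_space \<nu>" "sets \<nu> = sets borel"
    and conv: "\<And>g :: 'x \<Rightarrow> real. continuous_on UNIV g \<Longrightarrow>
      (\<lambda>n. \<integral>x. g x \<partial>measure_pmf (p (s (s' n)))) \<longlonglongrightarrow> (\<integral>x. g x \<partial>\<nu>)"
    using pmf_seq_weak_convergent_subseq[OF X_compact, of "p \<circ> s"] by auto
  define \<sigma> where "\<sigma> = s \<circ> s'"
  have "strict_mono \<sigma>" unfolding \<sigma>_def using \<open>strict_mono s\<close> \<open>strict_mono s'\<close> by (rule strict_mono_o)
  have \<rho>_lim: "(\<lambda>n. \<rho>' (\<sigma> n)) \<longlonglongrightarrow> \<rho>"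
    using LIMSEQ_subseq_LIMSEQ[OF \<open>(\<rho>' \<circ> s) \<longlonglongrightarrow> \<rho>\<close> \<open>strict_mono s'\<close>] by (simp add: \<sigma>_def o_def)
  have r_lim: "(\<lambda>n. r (\<sigma> n)) \<longlonglongrightarrow> 0"
    using LIMSEQ_subseq_LIMSEQ[OF LIMSEQ_inverse_real_of_nat \<open>strict_mono \<sigma>\<close>]
    by (simp add: r_def o_def inverse_eq_divide)
  have "(\<integral>x. Bq_fun q \<tau> f x \<partial>\<nu>) = \<rho> * (\<integral>x. f x \<partial>\<nu>)" if f: "continuous_on UNIV f" for f
  proof -
    let ?d = "\<lambda>n. (\<integral>x. Bq_fun q \<tau> f x \<partial>p (\<sigma> n)) - \<rho>' (\<sigma> n) * (\<integral>x. f x \<partial>p (\<sigma> n))"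
    have "?d \<longlonglongrightarrow> (\<integral>x. Bq_fun q \<tau> f x \<partial>\<nu>) - \<rho> * (\<integral>x. f x \<partial>\<nu>)"
      unfolding \<sigma>_def o_def using f
      by (intro tendsto_intros conv continuous_on_Bq_fun \<rho>_lim[unfolded \<sigma>_def o_def])
    moreover have "?d \<longlonglongrightarrow> 0"
      by (rule approx_eigen_defect_tendsto_0[OF approx r_lim f])
    ultimately show ?thesis using LIMSEQ_unique by fastforce
  qed
  with \<open>prob_space \<nu>\<close> \<open>sets \<nu> = sets borel\<close> \<open>\<rho> \<in> {c..C}\<close> show ?thesis
    using that by auto
qed

lemma integrable_continuous_probability:
  fixes f :: "'x \<Rightarrow> real"
  assumes "prob_space \<nu>" "sets \<nu> = sets borel" "continuous_on UNIV f"
  shows "integrable \<nu> f"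
proof -
  interpret prob_space \<nu> by fact
  obtain B where "\<And>x. \<bar>f x\<bar> \<le> B" using continuous_on_compact_space_bounded[OF X_compact assms(3)] by blast
  moreover have "f \<in> borel_measurable \<nu>"
    using borel_measurable_continuous_onI[OF assms(3)] by (simp add: measurable_cong_sets[OF assms(2) refl])
  ultimately show ?thesis by (intro integrable_const_bound[where B=B]) auto
qed

lemma eigenvalue_le_spectral_radius:
  assumes \<nu>: "prob_space \<nu>" "sets \<nu> = sets borel" and "0 < \<rho>"
    and eigen: "\<And>f. continuous_on UNIV f \<Longrightarrow> (\<integral>x. Bq_fun q \<tau> f x \<partial>\<nu>) = \<rho> * (\<integral>x. f x \<partial>\<nu>)"
  shows "\<rho> \<le> spectral_radius (Bq_op q \<tau>)"
  unfolding spectral_radius_def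
proof (rule cINF_greatest)
  interpret prob_space \<nu> by fact
  fix n :: nat assume "n \<in> {1..}"
  have "(\<integral>x. (Bq_fun q \<tau> ^^ n) (\<lambda>_. 1) x \<partial>\<nu>) = \<rho> ^ n" for n
  proof (induction n)
    case (Suc n)
    then show ?case
      using eigen[OF continuous_on_funpow_Bq_fun[of "\<lambda>_. 1" n]] by simp
  qed (simp add: prob_space)
  then have "\<rho> ^ n = (\<integral>x. (Bq_fun q \<tau> ^^ n) (\<lambda>_. 1) x \<partial>\<nu>)" by simp
  also have "\<dots> \<le> (\<integral>x. norm (blinfun_pow (Bq_op q \<tau>) n) \<partial>\<nu>)"
    by (intro integral_mono integrable_continuous_probability[OF \<nu>] continuous_on_funpow_Bq_fun
        continuous_on_const funpow_Bq_fun_one_le_norm)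
  finally have "\<rho> ^ n \<le> norm (blinfun_pow (Bq_op q \<tau>) n)" by (simp add: prob_space)
  then have "(\<rho> ^ n) powr (1 / real n) \<le> norm (blinfun_pow (Bq_op q \<tau>) n) powr (1 / real n)"
    using \<open>0 < \<rho>\<close> by (intro powr_mono2) auto
  then show "\<rho> \<le> norm (blinfun_pow (Bq_op q \<tau>) n) powr (1 / real n)"
    using \<open>0 < \<rho>\<close> \<open>n \<in> {1..}\<close> by (simp add: powr_realpow[symmetric] powr_powr)
qed simp

lemma Lq_image_scale_measure:
  assumes "sets \<nu> = sets borel" "0 \<le> \<rho>"
    and eigen: "\<And>f. continuous_on UNIV f \<Longrightarrow> (\<integral>x. Bq_fun q \<tau> f x \<partial>\<nu>) = \<rho> * (\<integral>x. f x \<partial>\<nu>)"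
  shows "Lq_image q \<tau> \<nu> (scale_measure (ennreal \<rho>) \<nu>)"
  unfolding Lq_image_def
proof (intro conjI allI impI)
  show "sets (scale_measure (ennreal \<rho>) \<nu>) = sets borel" using assms(1) by simp
  fix f :: "'x \<Rightarrow> real" assume f: "continuous_on UNIV f"
  have "f \<in> borel_measurable \<nu>"
    using borel_measurable_continuous_onI[OF f] by (simp add: measurable_cong_sets[OF assms(1) refl])
  then show "(\<integral>x. f x \<partial>scale_measure (ennreal \<rho>) \<nu>) = (\<integral>x. Bq_fun q \<tau> f x \<partial>\<nu>)"
    using eigen[OF f] integral_scale_measure[OF assms(2)] by simp
qed

end

theorem mainTheorem3:
  fixes \<tau> :: "'t::metric_space \<Rightarrow> 'x::metric_space \<Rightarrow> 'x"
    and q :: "'x \<Rightarrow> 't measure"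
  assumes X_compact: "compact (UNIV :: 'x set)"
    and Theta_compact: "compact (UNIV :: 't set)"
    and tau_cont: "continuous_on UNIV (\<lambda>(\<theta>, x). \<tau> \<theta> x)"
    and q_borel: "\<forall>x. sets (q x) = sets (borel :: 't measure)"
    and q_finite: "\<forall>x. finite_measure (q x)"
    and q_sup: "\<exists>C::real. \<forall>x. measure (q x) UNIV \<le> C"
    and q_inf: "\<exists>c::real. c > 0 \<and> (\<forall>x. c \<le> measure (q x) UNIV)"
    and q_meas: "\<forall>A \<in> sets (borel :: 't measure). (\<lambda>x. emeasure (q x) A) \<in> borel_measurable borel"
    and q_weak_cont: "\<forall>f::'t \<Rightarrow> real. continuous_on UNIV f \<longrightarrow>
                        continuous_on UNIV (\<lambda>x. \<integral>\<theta>. f \<theta> \<partial>(q x))"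
  shows "\<exists>\<rho>::real. 0 < \<rho> \<and> \<rho> \<le> spectral_radius (Bq_op q \<tau>) \<and>
           (\<exists>\<nu>::'x measure. prob_space \<nu> \<and> sets \<nu> = sets borel \<and>
               Lq_image q \<tau> \<nu> (scale_measure (ennreal \<rho>) \<nu>))"
proof -
  obtain C c :: real where C: "\<forall>x. measure (q x) UNIV \<le> C" and c: "0 < c" "\<forall>x. c \<le> measure (q x) UNIV"
    using q_sup q_inf by blast
  interpret transfer_system \<tau> q c C
    using X_compact Theta_compact tau_cont q_borel q_finite c C q_weak_cont
    by (intro transfer_system.intro) simp_all
  obtain \<nu> \<rho> where \<nu>: "prob_space \<nu>" "sets \<nu> = sets borel" and "c \<le> \<rho>"
    and eigen: "\<And>f. continuous_on UNIV f \<Longrightarrow> (\<integral>x. Bq_fun q \<tau> f x \<partial>\<nu>) = \<rho> * (\<integral>x. f x \<partial>\<nu>)"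
    using exists_eigen_probability by blast
  have "0 < \<rho>" using \<open>c \<le> \<rho>\<close> c_pos by simp
  moreover have "\<rho> \<le> spectral_radius (Bq_op q \<tau>)"
    by (rule eigenvalue_le_spectral_radius[OF \<nu> \<open>0 < \<rho>\<close> eigen])
  moreover have "Lq_image q \<tau> \<nu> (scale_measure (ennreal \<rho>) \<nu>)"
    using \<open>0 < \<rho>\<close> by (intro Lq_image_scale_measure[OF \<nu>(2) _ eigen]) simp
  ultimately show ?thesis using \<nu> by blast
qed

end
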